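(* Let $\mathcal F$ be a finite family of closed axis-parallel rectangles all of whose side-lengths are rational. Then there is an $\mathcal F$-piercing lattice of minimum density among all $\mathcal F$-piercing lattices that has a vector basis with rational coordinates.
   Context: A point set is $\mathcal F$-piercing if every translate of every rectangle in $\mathcal F$ contains one of its points. A lattice $\{iu+jv:i,j\in\mathbb Z\}$ with $u,v$ linearly independent has density $1/|\det[u,v]|$. *)

theory Defs
  imports "HOL-Analysis.Analysis"
begin

type_synonym pt = "real \<times> real"

definition lattice :: "pt \<Rightarrow> pt \<Rightarrow> pt set" where
  "lattice u v = {of_int i *\<^sub>R u + of_int j *\<^sub>R v | i j. True}"

definition det2 :: "pt \<Rightarrow> pt \<Rightarrow> real" where
  "det2 u v = fst u * snd v - snd u * fst v"

definition lin_indep2 :: "pt \<Rightarrow> pt \<Rightarrow> bool" where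
  "lin_indep2 u v \<longleftrightarrow> det2 u v \<noteq> 0"

definition lattice_density :: "pt \<Rightarrow> pt \<Rightarrow> real" where
  "lattice_density u v = 1 / \<bar>det2 u v\<bar>"

definition rational_rectangle :: "pt set \<Rightarrow> bool" where
  "rational_rectangle R \<longleftrightarrow> (\<exists>p q. R = cbox p q \<and> fst p < fst q \<and> snd p < snd q
       \<and> fst q - fst p \<in> \<rat> \<and> snd q - snd p \<in> \<rat>)"

definition piercing :: "pt set set \<Rightarrow> pt set \<Rightarrow> bool" where
  "piercing F P \<longleftrightarrow> (\<forall>R\<in>F. \<forall>t. \<exists>z\<in>P. z \<in> (\<lambda>x. t + x) ` R)"

end

theory Submission
  imports Defs
begin

text \<open>Piercing all translates of an \<open>a \<times> b\<close> box is a closed condition on a basis with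
  nonzero determinant, and by lattice reduction every piercing lattice has a basis of bounded
  length; by compactness some piercing lattice has maximal determinant, i.e. minimal density.

  Near such an optimal basis \<open>z0\<close>, a lattice still pierces the boxes as long as it keeps the
  coordinates of the tight lattice vectors of \<open>z0\<close>, those whose first coordinate is a width
  or whose second coordinate is a height.  These are linear equations with rational
  coefficients, and optimality makes \<open>z0\<close> a critical point of the quadratic form \<open>det\<close> along
  their solution space.  Since rational solutions of a rational linear system are dense among its
  real solutions, there is a rational basis near \<open>z0\<close> satisfying the tight equations together
  with the rational criticality equations, and its determinant equals that of \<open>z0\<close>.\<close>

section \<open>Lattices given by a basis\<close>

definition lattice_point :: "pt \<times> pt \<Rightarrow> int \<times> int \<Rightarrow> pt" where
  "lattice_point z n = of_int (fst n) *\<^sub>R fst z + of_int (snd n) *\<^sub>R snd z"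

abbreviation basis_lattice :: "pt \<times> pt \<Rightarrow> pt set" where
  "basis_lattice z \<equiv> lattice (fst z) (snd z)"

abbreviation basis_det :: "pt \<times> pt \<Rightarrow> real" where
  "basis_det z \<equiv> det2 (fst z) (snd z)"

lemma basis_lattice_iff: "y \<in> basis_lattice z \<longleftrightarrow> (\<exists>n. y = lattice_point z n)"
  unfolding lattice_def lattice_point_def by force

lemma lattice_point_in_basis_lattice [simp]: "lattice_point z n \<in> basis_lattice z"
  using basis_lattice_iff by blast

lemma basis_lattice_add:
  assumes "x \<in> basis_lattice z" "y \<in> basis_lattice z"
  shows "x + y \<in> basis_lattice z"
proof -
  obtain n m where "x = lattice_point z n" "y = lattice_point z m"
    using assms basis_lattice_iff by blast
  then have "x + y = lattice_point z (fst n + fst m, snd n + snd m)"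
    by (simp add: lattice_point_def algebra_simps)
  then show ?thesis by simp
qed

lemma basis_lattice_diff:
  assumes "x \<in> basis_lattice z" "y \<in> basis_lattice z"
  shows "x - y \<in> basis_lattice z"
proof -
  obtain n m where "x = lattice_point z n" "y = lattice_point z m"
    using assms basis_lattice_iff by blast
  then have "x - y = lattice_point z (fst n - fst m, snd n - snd m)"
    by (simp add: lattice_point_def algebra_simps)
  then show ?thesis by simp
qed

lemma basis_lattice_subset:
  assumes "fst z' \<in> basis_lattice z" "snd z' \<in> basis_lattice z"
  shows "basis_lattice z' \<subseteq> basis_lattice z"
proof
  fix y assume "y \<in> basis_lattice z'"
  then obtain k where y: "y = lattice_point z' k" using basis_lattice_iff by blast
  obtain n m where "fst z' = lattice_point z n" "snd z' = lattice_point z m"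
    using assms basis_lattice_iff by blast
  then have "y = lattice_point z (fst k * fst n + snd k * fst m, fst k * snd n + snd k * snd m)"
    by (simp add: y lattice_point_def algebra_simps)
  then show "y \<in> basis_lattice z" by simp
qed

lemma lattice_commute: "lattice v u = lattice u v"
  unfolding lattice_def by (metis add.commute)

lemma norm_rotate: "norm (- snd x, fst x) = norm (x :: pt)"
  by (cases x) (simp add: norm_Pair add.commute)

lemma abs_det2_le: "\<bar>det2 x y\<bar> \<le> norm x * norm y"
proof -
  have "det2 x y = inner (- snd x, fst x) y"
    by (simp add: det2_def inner_prod_def)
  then show ?thesis
    using Cauchy_Schwarz_ineq2[of "(- snd x, fst x)" y] by (simp add: norm_rotate)
qed

lemma det2_lattice_point:
  "det2 (lattice_point z n) (snd z) = of_int (fst n) * basis_det z"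
  "det2 (fst z) (lattice_point z n) = of_int (snd n) * basis_det z"
  by (simp_all add: lattice_point_def det2_def algebra_simps)

lemma lattice_coeff_bound:
  assumes "basis_det z \<noteq> 0"
  shows "\<bar>of_int (fst n)\<bar> \<le> norm (lattice_point z n) * (norm (fst z) + norm (snd z)) / \<bar>basis_det z\<bar>"
    and "\<bar>of_int (snd n)\<bar> \<le> norm (lattice_point z n) * (norm (fst z) + norm (snd z)) / \<bar>basis_det z\<bar>"
proof -
  have "\<bar>of_int (fst n)\<bar> * \<bar>basis_det z\<bar> \<le> norm (lattice_point z n) * norm (snd z)"
    using abs_det2_le[of "lattice_point z n" "snd z"] by (simp add: det2_lattice_point abs_mult)
  also have "\<dots> \<le> norm (lattice_point z n) * (norm (fst z) + norm (snd z))"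
    by (simp add: mult_left_mono)
  finally show "\<bar>of_int (fst n)\<bar> \<le> norm (lattice_point z n) * (norm (fst z) + norm (snd z)) / \<bar>basis_det z\<bar>"
    using assms by (simp add: pos_le_divide_eq)
  have "\<bar>of_int (snd n)\<bar> * \<bar>basis_det z\<bar> \<le> norm (fst z) * norm (lattice_point z n)"
    using abs_det2_le[of "fst z" "lattice_point z n"] by (simp add: det2_lattice_point abs_mult)
  also have "\<dots> = norm (lattice_point z n) * norm (fst z)"
    by (rule mult.commute)
  also have "\<dots> \<le> norm (lattice_point z n) * (norm (fst z) + norm (snd z))"
    by (simp add: mult_left_mono)
  finally show "\<bar>of_int (snd n)\<bar> \<le> norm (lattice_point z n) * (norm (fst z) + norm (snd z)) / \<bar>basis_det z\<bar>"
    using assms by (simp add: pos_le_divide_eq)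
qed

lemma lattice_coeffs_in_box:
  assumes "basis_det z \<noteq> 0" "norm (lattice_point z n) \<le> r"
    and "r * (norm (fst z) + norm (snd z)) / \<bar>basis_det z\<bar> \<le> X"
  shows "n \<in> {-\<lceil>X\<rceil>..\<lceil>X\<rceil>} \<times> {-\<lceil>X\<rceil>..\<lceil>X\<rceil>}"
proof -
  have "norm (lattice_point z n) * (norm (fst z) + norm (snd z)) / \<bar>basis_det z\<bar>
      \<le> r * (norm (fst z) + norm (snd z)) / \<bar>basis_det z\<bar>"
    using assms(2) by (intro divide_right_mono mult_right_mono) auto
  then have "\<bar>of_int (fst n)\<bar> \<le> X" "\<bar>of_int (snd n)\<bar> \<le> X"
    using lattice_coeff_bound[OF assms(1), of n] assms(3) by linarith+
  then have "\<bar>fst n\<bar> \<le> \<lceil>X\<rceil>" "\<bar>snd n\<bar> \<le> \<lceil>X\<rceil>"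
    by (metis ceiling_mono ceiling_of_int of_int_abs)+
  then show ?thesis by (simp add: mem_Times_iff abs_le_iff)
qed

lemma finite_basis_lattice_inter_bounded:
  assumes "basis_det z \<noteq> 0" "bounded S"
  shows "finite (basis_lattice z \<inter> S)"
proof -
  obtain r where r: "\<forall>y\<in>S. norm y \<le> r" using assms(2) unfolding bounded_pos by blast
  define X where "X = r * (norm (fst z) + norm (snd z)) / \<bar>basis_det z\<bar>"
  have "basis_lattice z \<inter> S \<subseteq> lattice_point z ` ({-\<lceil>X\<rceil>..\<lceil>X\<rceil>} \<times> {-\<lceil>X\<rceil>..\<lceil>X\<rceil>})"
  proof
    fix y assume y: "y \<in> basis_lattice z \<inter> S"
    then obtain n where n: "y = lattice_point z n" using basis_lattice_iff by blast
    have "norm (lattice_point z n) \<le> r" using y r n by blast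
    then have "n \<in> {-\<lceil>X\<rceil>..\<lceil>X\<rceil>} \<times> {-\<lceil>X\<rceil>..\<lceil>X\<rceil>}"
      using lattice_coeffs_in_box[OF assms(1)] unfolding X_def by blast
    then show "y \<in> lattice_point z ` ({-\<lceil>X\<rceil>..\<lceil>X\<rceil>} \<times> {-\<lceil>X\<rceil>..\<lceil>X\<rceil>})" using n by blast
  qed
  then show ?thesis by (rule finite_subset) simp
qed

lemma basis_det_scaleR:
  "basis_det z *\<^sub>R c = det2 c (snd z) *\<^sub>R fst z + det2 (fst z) c *\<^sub>R snd z"
  by (simp add: det2_def prod_eq_iff algebra_simps)

lemma basis_expansion:
  assumes "basis_det z \<noteq> 0"
  shows "c = (det2 c (snd z) / basis_det z) *\<^sub>R fst z + (det2 (fst z) c / basis_det z) *\<^sub>R snd z"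
proof -
  have "c = inverse (basis_det z) *\<^sub>R (basis_det z *\<^sub>R c)" using assms by simp
  also have "\<dots> = (det2 c (snd z) / basis_det z) *\<^sub>R fst z + (det2 (fst z) c / basis_det z) *\<^sub>R snd z"
    by (simp only: basis_det_scaleR scaleR_add_right scaleR_scaleR) (simp add: divide_inverse mult.commute)
  finally show ?thesis .
qed

lemma exists_lattice_point_near:
  assumes "basis_det z \<noteq> 0"
  shows "\<exists>p\<in>basis_lattice z. norm (c - p) \<le> norm (fst z) + norm (snd z)"
proof -
  define \<alpha> where "\<alpha> = det2 c (snd z) / basis_det z"
  define \<beta> where "\<beta> = det2 (fst z) c / basis_det z"
  define p where "p = lattice_point z (\<lfloor>\<alpha>\<rfloor>, \<lfloor>\<beta>\<rfloor>)"
  have "c - p = (\<alpha> - of_int \<lfloor>\<alpha>\<rfloor>) *\<^sub>R fst z + (\<beta> - of_int \<lfloor>\<beta>\<rfloor>) *\<^sub>R snd z"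
    using basis_expansion[OF assms, of c] unfolding p_def lattice_point_def \<alpha>_def \<beta>_def
    by (simp add: algebra_simps)
  also have "norm \<dots> \<le> norm (fst z) + norm (snd z)"
  proof (rule norm_triangle_le, rule add_mono)
    have "\<bar>\<alpha> - of_int \<lfloor>\<alpha>\<rfloor>\<bar> \<le> 1" "\<bar>\<beta> - of_int \<lfloor>\<beta>\<rfloor>\<bar> \<le> 1"
      by (simp_all add: abs_le_iff) linarith+
    then show "norm ((\<alpha> - of_int \<lfloor>\<alpha>\<rfloor>) *\<^sub>R fst z) \<le> norm (fst z)"
      and "norm ((\<beta> - of_int \<lfloor>\<beta>\<rfloor>) *\<^sub>R snd z) \<le> norm (snd z)"
      by (simp_all add: mult_left_le_one_le)
  qed
  finally show ?thesis unfolding p_def by auto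
qed

lemma basis_det_of_sublattice:
  assumes "fst z' \<in> basis_lattice z" "snd z' \<in> basis_lattice z"
  obtains k :: int where "basis_det z' = of_int k * basis_det z"
proof -
  obtain n m where "fst z' = lattice_point z n" "snd z' = lattice_point z m"
    using assms basis_lattice_iff by blast
  then have "basis_det z' = of_int (fst n * snd m - snd n * fst m) * basis_det z"
    by (simp add: lattice_point_def det2_def algebra_simps)
  then show ?thesis by (rule that)
qed

lemma abs_basis_det_eq_if_same_lattice:
  assumes "basis_det z \<noteq> 0" "basis_det z' \<noteq> 0" "basis_lattice z' = basis_lattice z"
  shows "\<bar>basis_det z'\<bar> = \<bar>basis_det z\<bar>"
proof -
  have le: "\<bar>basis_det w\<bar> \<le> \<bar>basis_det w'\<bar>"
    if "basis_det w' \<noteq> 0" "basis_lattice w' = basis_lattice w" for w w'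
  proof -
    have "fst w' \<in> basis_lattice w" "snd w' \<in> basis_lattice w"
      using that(2) lattice_point_in_basis_lattice[of w' "(1, 0)"]
        lattice_point_in_basis_lattice[of w' "(0, 1)"] by (simp_all add: lattice_point_def)
    then obtain k :: int where k: "basis_det w' = of_int k * basis_det w"
      by (rule basis_det_of_sublattice)
    then have "k \<noteq> 0" using that(1) by auto
    then have "1 \<le> \<bar>real_of_int k\<bar>" by linarith
    then show ?thesis
      using k mult_right_mono[of 1 "\<bar>real_of_int k\<bar>" "\<bar>basis_det w\<bar>"] by (simp add: abs_mult)
  qed
  show ?thesis using le[of z' z] le[of z z'] assms by simp
qed

lemma det2_eq_0_if_norm_add_eq:
  assumes "norm (x + y) = norm x + norm y"
  shows "det2 x y = 0"
proof (cases "x = 0")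
  case True
  then show ?thesis by (simp add: det2_def)
next
  case False
  have "norm x * det2 x y = det2 x (norm x *\<^sub>R y)"
    by (simp add: det2_def algebra_simps)
  also have "\<dots> = det2 x (norm y *\<^sub>R x)"
    using assms norm_triangle_eq by metis
  also have "\<dots> = 0"
    by (simp add: det2_def algebra_simps)
  finally show ?thesis using False by simp
qed

lemma exists_shortest_in_basis_lattice:
  assumes "basis_det z \<noteq> 0" "A \<subseteq> basis_lattice z" "a \<in> A"
  obtains u where "u \<in> A" "\<forall>y\<in>A. norm u \<le> norm y"
proof -
  define B where "B = A \<inter> cball 0 (norm a)"
  have fin: "finite B"
    by (rule finite_subset[OF _ finite_basis_lattice_inter_bounded[OF assms(1) bounded_cball]])
      (use assms(2) in \<open>auto simp: B_def\<close>)
  have "a \<in> B" using assms(3) by (simp add: B_def)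
  then have u: "arg_min_on norm B \<in> B" "\<forall>y\<in>B. norm (arg_min_on norm B) \<le> norm y"
    using fin by (auto intro: arg_min_if_finite(1) arg_min_least)
  have "norm (arg_min_on norm B) \<le> norm y" if "y \<in> A" for y
  proof (cases "y \<in> B")
    case True
    then show ?thesis using u by blast
  next
    case False
    then have "norm a < norm y" using that by (simp add: B_def)
    moreover have "norm (arg_min_on norm B) \<le> norm a" using u \<open>a \<in> B\<close> by blast
    ultimately show ?thesis by simp
  qed
  then show ?thesis using u(1) that unfolding B_def by blast
qed

lemma norm_scaleR_le_half:
  assumes "\<bar>c\<bar> \<le> 1/2"
  shows "norm (c *\<^sub>R x) \<le> norm x / 2"
  using mult_right_mono[OF assms norm_ge_zero[of x]] by simp

lemma norm_half_combination_less:
  assumes "\<bar>a\<bar> \<le> 1/2" "\<bar>b\<bar> \<le> 1/2" "b \<noteq> 0" "det2 u v \<noteq> 0" "norm u \<le> norm v"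
  shows "norm (a *\<^sub>R u + b *\<^sub>R v) < norm v"
proof (cases "a = 0")
  case True
  have "v \<noteq> 0" using assms(4) by (auto simp: det2_def)
  then show ?thesis using True norm_scaleR_le_half[OF assms(2), of v] by simp
next
  case False
  have "det2 (a *\<^sub>R u) (b *\<^sub>R v) = a * b * det2 u v" by (simp add: det2_def algebra_simps)
  then have "det2 (a *\<^sub>R u) (b *\<^sub>R v) \<noteq> 0" using False assms(3,4) by simp
  then have "norm (a *\<^sub>R u + b *\<^sub>R v) \<noteq> norm (a *\<^sub>R u) + norm (b *\<^sub>R v)"
    using det2_eq_0_if_norm_add_eq by blast
  moreover have "norm (a *\<^sub>R u + b *\<^sub>R v) \<le> norm (a *\<^sub>R u) + norm (b *\<^sub>R v)"
    by (rule norm_triangle_ineq)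
  ultimately show ?thesis
    using norm_scaleR_le_half[OF assms(1), of u] norm_scaleR_le_half[OF assms(2), of v] assms(5)
    by linarith
qed

lemma basis_lattice_of_successive_minima:
  assumes u: "u \<in> basis_lattice z" "u \<noteq> 0" "\<forall>y\<in>basis_lattice z. y \<noteq> 0 \<longrightarrow> norm u \<le> norm y"
    and v: "v \<in> basis_lattice z" "det2 u v \<noteq> 0"
      "\<forall>y\<in>basis_lattice z. det2 u y \<noteq> 0 \<longrightarrow> norm v \<le> norm y"
  shows "basis_lattice (u, v) = basis_lattice z"
proof
  show sub: "basis_lattice (u, v) \<subseteq> basis_lattice z"
    using basis_lattice_subset[of "(u, v)" z] u(1) v(1) by simp
  have "v \<noteq> 0" using v(2) by (auto simp: det2_def)
  then have uv: "norm u \<le> norm v" using u(3) v(1) by blast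
  show "basis_lattice z \<subseteq> basis_lattice (u, v)"
  proof
    fix w assume w: "w \<in> basis_lattice z"
    define i where "i = round (det2 w v / det2 u v)"
    define j where "j = round (det2 u w / det2 u v)"
    define a where "a = det2 w v / det2 u v - of_int i"
    define b where "b = det2 u w / det2 u v - of_int j"
    have ab: "\<bar>a\<bar> \<le> 1/2" "\<bar>b\<bar> \<le> 1/2"
      unfolding a_def b_def i_def j_def using of_int_round_abs_le
      by (simp_all add: abs_minus_commute)
    define w' where "w' = w - lattice_point (u, v) (i, j)"
    have w': "w' = a *\<^sub>R u + b *\<^sub>R v"
      using basis_expansion[of "(u, v)" w] v(2)
      unfolding w'_def a_def b_def lattice_point_def by (simp add: algebra_simps)
    have "lattice_point (u, v) (i, j) \<in> basis_lattice z"
      using sub lattice_point_in_basis_lattice[of "(u, v)" "(i, j)"] by auto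
    then have w'L: "w' \<in> basis_lattice z"
      unfolding w'_def by (rule basis_lattice_diff[OF w])
    have "b = 0"
    proof (rule ccontr)
      assume "b \<noteq> 0"
      have "det2 u w' = b * det2 u v" by (simp add: w' det2_def algebra_simps)
      then have "norm v \<le> norm w'" using v(2,3) w'L \<open>b \<noteq> 0\<close> by simp
      moreover have "norm w' < norm v"
        unfolding w' by (rule norm_half_combination_less[OF ab \<open>b \<noteq> 0\<close> v(2) uv])
      ultimately show False by simp
    qed
    have "a = 0"
    proof (rule ccontr)
      assume "a \<noteq> 0"
      then have "w' \<noteq> 0" "norm w' < norm u"
        using \<open>b = 0\<close> u(2) norm_scaleR_le_half[OF ab(1), of u] by (simp_all add: w')
      then show False using u(3) w'L by fastforce
    qed
    then have "w = lattice_point (u, v) (i, j)" using \<open>b = 0\<close> w' w'_def by simp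
    then show "w \<in> basis_lattice (u, v)" using lattice_point_in_basis_lattice[of "(u, v)"] by simp
  qed
qed

lemma exists_short_nonzero_lattice_point:
  assumes "0 < s" and cov: "\<forall>x. \<exists>y\<in>basis_lattice z. norm (y - x) \<le> s"
  obtains y where "y \<in> basis_lattice z" "y \<noteq> 0" "norm y \<le> 3 * s"
proof -
  define c :: pt where "c = (2 * s, 0)"
  obtain y where y: "y \<in> basis_lattice z" "norm (y - c) \<le> s" using cov by blast
  have "norm c = sqrt ((2 * s)\<^sup>2)" by (simp add: c_def norm_Pair)
  also have "\<dots> = 2 * s" using assms(1) by (simp only: real_sqrt_abs)
  finally have nc: "norm c = 2 * s" .
  have "y \<noteq> 0" using y(2) nc assms(1) by auto
  moreover have "norm y \<le> norm (y - c) + norm c" using norm_triangle_ineq[of "y - c" c] by simp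
  ultimately show ?thesis using that y nc by simp
qed

lemma exists_short_lattice_point_off_line:
  assumes "0 < s" and cov: "\<forall>x. \<exists>y\<in>basis_lattice z. norm (y - x) \<le> s" and "u \<noteq> 0"
  obtains y where "y \<in> basis_lattice z" "det2 u y \<noteq> 0" "norm y \<le> 4 * s"
proof -
  have nu: "0 < norm u" using assms(3) by simp
  define x where "x = (3 * s / norm u) *\<^sub>R (- snd u, fst u)"
  have "det2 u x = 3 * s / norm u * ((fst u)\<^sup>2 + (snd u)\<^sup>2)"
    by (simp add: x_def det2_def power2_eq_square algebra_simps)
  also have "\<dots> = 3 * s / norm u * (norm u)\<^sup>2" by (cases u) (simp add: norm_Pair)
  also have "\<dots> = 3 * s * norm u" using nu by (simp add: power2_eq_square)
  finally have dx: "det2 u x = 3 * s * norm u" .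
  have nx: "norm x = 3 * s"
    unfolding x_def norm_scaleR norm_rotate using nu assms(1) by simp
  obtain y where y: "y \<in> basis_lattice z" "norm (y - x) \<le> s" using cov by blast
  have "\<bar>det2 u (y - x)\<bar> \<le> s * norm u"
    using abs_det2_le[of u "y - x"] mult_right_mono[OF y(2) norm_ge_zero[of u]]
    by (simp add: mult.commute)
  moreover have "det2 u y = det2 u x + det2 u (y - x)" by (simp add: det2_def algebra_simps)
  moreover have "0 < s * norm u" using nu assms(1) by simp
  ultimately have "det2 u y \<noteq> 0" using dx by (simp add: abs_le_iff)
  moreover have "norm y \<le> norm (y - x) + norm x" using norm_triangle_ineq[of "y - x" x] by simp
  ultimately show ?thesis using that y nx by simp
qed

lemma exists_short_basis:
  assumes "basis_det z \<noteq> 0" "0 < s"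
    and cov: "\<forall>x. \<exists>y\<in>basis_lattice z. norm (y - x) \<le> s"
  obtains z' where "basis_lattice z' = basis_lattice z" "basis_det z' \<noteq> 0"
    "norm (fst z') \<le> 4 * s" "norm (snd z') \<le> 4 * s"
proof -
  obtain y0 where y0: "y0 \<in> basis_lattice z" "y0 \<noteq> 0" "norm y0 \<le> 3 * s"
    using exists_short_nonzero_lattice_point[OF assms(2) cov] by blast
  obtain u where u: "u \<in> {y \<in> basis_lattice z. y \<noteq> 0}"
      "\<forall>y\<in>{y \<in> basis_lattice z. y \<noteq> 0}. norm u \<le> norm y"
    by (rule exists_shortest_in_basis_lattice[OF assms(1), of "{y \<in> basis_lattice z. y \<noteq> 0}" y0])
      (use y0 in auto)
  obtain y1 where y1: "y1 \<in> basis_lattice z" "det2 u y1 \<noteq> 0" "norm y1 \<le> 4 * s"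
    using exists_short_lattice_point_off_line[OF assms(2) cov] u(1) by blast
  obtain v where v: "v \<in> {y \<in> basis_lattice z. det2 u y \<noteq> 0}"
      "\<forall>y\<in>{y \<in> basis_lattice z. det2 u y \<noteq> 0}. norm v \<le> norm y"
    by (rule exists_shortest_in_basis_lattice[OF assms(1), of "{y \<in> basis_lattice z. det2 u y \<noteq> 0}" y1])
      (use y1 in auto)
  have "norm u \<le> norm y0" "norm v \<le> norm y1" using u(2) v(2) y0(1,2) y1(1,2) by blast+
  then have "norm u \<le> 4 * s" "norm v \<le> 4 * s" using y0(3) y1(3) assms(2) by auto
  moreover have "basis_lattice (u, v) = basis_lattice z"
    by (rule basis_lattice_of_successive_minima) (use u v in auto)
  ultimately show ?thesis using that[of "(u, v)"] v(1) by simp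
qed

section \<open>Piercing the translates of a box\<close>

definition box_piercing :: "real \<Rightarrow> real \<Rightarrow> pt set \<Rightarrow> bool" where
  "box_piercing a b P \<longleftrightarrow> (\<forall>c. \<exists>y\<in>P. y \<in> cbox c (c + (a, b)))"

lemma mem_cbox_pt:
  "y \<in> cbox p q \<longleftrightarrow> fst p \<le> fst y \<and> fst y \<le> fst q \<and> snd p \<le> snd y \<and> snd y \<le> snd q"
  for y p q :: pt
  by (cases p, cases q, cases y) (auto simp: cbox_Pair_eq)

lemma mem_box_pt:
  "y \<in> box p q \<longleftrightarrow> fst p < fst y \<and> fst y < fst q \<and> snd p < snd y \<and> snd y < snd q"
  for y p q :: pt
  by (auto simp: mem_box Basis_prod_def inner_Pair_0)

lemma norm_pt_le: "norm (y :: pt) \<le> \<bar>fst y\<bar> + \<bar>snd y\<bar>"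
  by (cases y) (simp add: norm_Pair sqrt_sum_squares_le_sum_abs)

lemma piercing_translates_cbox_iff:
  "(\<forall>t. \<exists>y\<in>P. y \<in> (\<lambda>x. t + x) ` cbox p q) \<longleftrightarrow> box_piercing (fst q - fst p) (snd q - snd p) P"
proof -
  have "(\<lambda>x. t + x) ` cbox p q = cbox (t + p) (t + p + (fst q - fst p, snd q - snd p))" for t
  proof -
    have "t + p + (fst q - fst p, snd q - snd p) = t + q" by (simp add: prod_eq_iff)
    then show ?thesis by (simp only: cbox_translation)
  qed
  then show ?thesis
    unfolding box_piercing_def by (metis diff_add_cancel)
qed

lemma box_piercing_mono:
  assumes "box_piercing a b P" "a \<le> a'" "b \<le> b'"
  shows "box_piercing a' b' P"
  unfolding box_piercing_def
proof
  fix c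
  obtain y where "y \<in> P" "y \<in> cbox c (c + (a, b))"
    using assms(1) unfolding box_piercing_def by blast
  then show "\<exists>y\<in>P. y \<in> cbox c (c + (a', b'))"
    using assms(2,3) by (auto simp: mem_cbox_pt)
qed

lemma box_piercing_imp_cover:
  assumes "box_piercing a b P"
  shows "\<exists>y\<in>P. norm (y - x) \<le> a + b"
proof -
  obtain y where y: "y \<in> P" "y \<in> cbox x (x + (a, b))"
    using assms unfolding box_piercing_def by blast
  then have "\<bar>fst (y - x)\<bar> \<le> a" "\<bar>snd (y - x)\<bar> \<le> b" by (auto simp: mem_cbox_pt)
  then have "norm (y - x) \<le> a + b" using norm_pt_le[of "y - x"] by linarith
  then show ?thesis using y(1) by blast
qed

lemma box_piercing_meets_wider_box:
  assumes "box_piercing a b P" "fst p + a < fst q" "snd p + b < snd q"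
  shows "P \<inter> box p q \<noteq> {}"
proof -
  define d1 where "d1 = (fst q - fst p - a) / 2"
  define d2 where "d2 = (snd q - snd p - b) / 2"
  have d: "0 < d1" "d1 + a < fst q - fst p" "0 < d2" "d2 + b < snd q - snd p"
    using assms(2,3) by (simp_all add: d1_def d2_def field_simps)
  obtain y where y: "y \<in> P" "y \<in> cbox (p + (d1, d2)) (p + (d1, d2) + (a, b))"
    using assms(1) unfolding box_piercing_def by blast
  then have "y \<in> box p q" using d by (auto simp: mem_cbox_pt mem_box_pt)
  then show ?thesis using y(1) by blast
qed

section \<open>Continuity in the basis\<close>

lemma tendsto_lattice_point [tendsto_intros]:
  "(f \<longlongrightarrow> z) F \<Longrightarrow> ((\<lambda>x. lattice_point (f x) n) \<longlongrightarrow> lattice_point z n) F"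
  unfolding lattice_point_def by (intro tendsto_intros)

lemma tendsto_basis_det [tendsto_intros]:
  "(f \<longlongrightarrow> z) F \<Longrightarrow> ((\<lambda>x. basis_det (f x)) \<longlongrightarrow> basis_det z) F"
  unfolding det2_def by (intro tendsto_intros)

lemma eventually_less_of_tendsto:
  fixes f g :: "'a \<Rightarrow> real"
  assumes "(f \<longlongrightarrow> a) F" "(g \<longlongrightarrow> b) F" "a < b"
  shows "eventually (\<lambda>x. f x < g x) F"
proof -
  have "eventually (\<lambda>x. 0 < g x - f x) F"
    using assms(3) by (intro order_tendstoD(1)[OF tendsto_diff[OF assms(2,1)]]) simp
  then show ?thesis by eventually_elim simp
qed

lemma eventually_lattice_coeffs_bounded:
  assumes "basis_det z0 \<noteq> 0"
  obtains N where "eventually (\<lambda>z. basis_det z \<noteq> 0 \<and>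
      (\<forall>n. norm (lattice_point z n) \<le> r \<longrightarrow> n \<in> {-N..N} \<times> {-N..N})) (nhds z0)"
proof -
  define C where "C = norm (fst z0) + norm (snd z0) + 1"
  define X where "X = r * C / (\<bar>basis_det z0\<bar> / 2)"
  have lim: "((\<lambda>z. z) \<longlongrightarrow> z0) (nhds z0)" by (rule filterlim_ident)
  have "eventually (\<lambda>z. \<bar>basis_det z0\<bar> / 2 < \<bar>basis_det z\<bar>) (nhds z0)"
    using assms by (intro order_tendstoD(1)[OF tendsto_rabs[OF tendsto_basis_det[OF lim]]]) simp
  moreover have "eventually (\<lambda>z. norm (fst z) + norm (snd z) < C) (nhds z0)"
    unfolding C_def
    by (intro order_tendstoD(2)[OF tendsto_add[OF tendsto_norm[OF tendsto_fst[OF lim]]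
          tendsto_norm[OF tendsto_snd[OF lim]]]]) simp
  ultimately have "eventually (\<lambda>z. basis_det z \<noteq> 0 \<and>
      (\<forall>n. norm (lattice_point z n) \<le> r \<longrightarrow> n \<in> {-\<lceil>X\<rceil>..\<lceil>X\<rceil>} \<times> {-\<lceil>X\<rceil>..\<lceil>X\<rceil>})) (nhds z0)"
  proof eventually_elim
    case (elim z)
    then have det: "basis_det z \<noteq> 0" by auto
    have "n \<in> {-\<lceil>X\<rceil>..\<lceil>X\<rceil>} \<times> {-\<lceil>X\<rceil>..\<lceil>X\<rceil>}" if n: "norm (lattice_point z n) \<le> r" for n
    proof (rule lattice_coeffs_in_box[OF det n])
      have "0 \<le> r" using n norm_ge_zero order_trans by blast
      moreover have "0 < C" unfolding C_def by (simp add: add_nonneg_pos)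
      ultimately show "r * (norm (fst z) + norm (snd z)) / \<bar>basis_det z\<bar> \<le> X"
        unfolding X_def using elim assms by (intro frac_le mult_left_mono) auto
    qed
    then show ?case using det by blast
  qed
  then show ?thesis by (rule that)
qed

lemma eventually_basis_lattice_disjoint:
  assumes "basis_det z0 \<noteq> 0" "compact K" "basis_lattice z0 \<inter> K = {}"
  shows "eventually (\<lambda>z. basis_lattice z \<inter> K = {}) (nhds z0)"
proof -
  obtain r where r: "\<forall>y\<in>K. norm y \<le> r"
    using compact_imp_bounded[OF assms(2)] unfolding bounded_pos by blast
  obtain N where N: "eventually (\<lambda>z. basis_det z \<noteq> 0 \<and>
      (\<forall>n. norm (lattice_point z n) \<le> r \<longrightarrow> n \<in> {-N..N} \<times> {-N..N})) (nhds z0)"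
    using eventually_lattice_coeffs_bounded[OF assms(1)] by blast
  have "eventually (\<lambda>z. lattice_point z n \<in> - K) (nhds z0)" for n
  proof (rule topological_tendstoD)
    show "((\<lambda>z. lattice_point z n) \<longlongrightarrow> lattice_point z0 n) (nhds z0)"
      by (intro tendsto_intros filterlim_ident)
    show "open (- K)" using compact_imp_closed[OF assms(2)] by (rule open_Compl)
    show "lattice_point z0 n \<in> - K" using assms(3) lattice_point_in_basis_lattice[of z0 n] by blast
  qed
  then have "eventually (\<lambda>z. \<forall>n\<in>{-N..N} \<times> {-N..N}. lattice_point z n \<in> - K) (nhds z0)"
    by (intro eventually_ball_finite) auto
  with N show ?thesis
  proof eventually_elim
    case (elim z)
    have "y \<notin> K" if "y \<in> basis_lattice z" for y
    proof
      assume "y \<in> K"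
      obtain n where n: "y = lattice_point z n"
        using \<open>y \<in> basis_lattice z\<close> unfolding basis_lattice_iff by blast
      then have "n \<in> {-N..N} \<times> {-N..N}" using elim(1) r \<open>y \<in> K\<close> by blast
      then show False using elim(2) n \<open>y \<in> K\<close> by blast
    qed
    then show ?case by blast
  qed
qed

lemma eventually_not_box_piercing:
  assumes "basis_det z0 \<noteq> 0" "\<not> box_piercing a b (basis_lattice z0)"
  shows "eventually (\<lambda>z. \<not> box_piercing a b (basis_lattice z)) (nhds z0)"
proof -
  obtain c where "basis_lattice z0 \<inter> cbox c (c + (a, b)) = {}"
    using assms(2) unfolding box_piercing_def by blast
  then have "eventually (\<lambda>z. basis_lattice z \<inter> cbox c (c + (a, b)) = {}) (nhds z0)"
    by (intro eventually_basis_lattice_disjoint[OF assms(1)] compact_cbox)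
  then show ?thesis
    unfolding box_piercing_def by eventually_elim blast
qed

section \<open>Stability of piercing under tight perturbations\<close>

lemma exists_maximal_gap:
  fixes f :: "'a \<Rightarrow> real"
  assumes "finite Y" "\<forall>y\<in>Y. f y \<notin> {c..c + a}"
  obtains l r where "c - 1 \<le> l" "l < c" "c + a < r" "r \<le> c + a + 1" "\<forall>y\<in>Y. f y \<notin> {l<..<r}"
    "a + 1 \<le> r - l \<or> (\<exists>y1\<in>Y. \<exists>y2\<in>Y. f y1 = l \<and> f y2 = r)"
proof -
  define L where "L = insert (c - 1) (f ` Y \<inter> {c - 1..<c})"
  define R where "R = insert (c + a + 1) (f ` Y \<inter> {c + a<..c + a + 1})"
  have fin: "finite L" "finite R" using assms(1) by (simp_all add: L_def R_def)
  have inL: "Max L \<in> L" using fin(1) by (intro Max_in) (auto simp: L_def)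
  have inR: "Min R \<in> R" using fin(2) by (intro Min_in) (auto simp: R_def)
  have geL: "x \<le> Max L" if "x \<in> L" for x using fin(1) that by simp
  have leR: "Min R \<le> x" if "x \<in> R" for x using fin(2) that by simp
  have bounds: "c - 1 \<le> Max L" "Max L < c" "c + a < Min R" "Min R \<le> c + a + 1"
    using inL inR geL[of "c - 1"] leR[of "c + a + 1"] by (auto simp: L_def R_def)
  have gap: "f y \<notin> {Max L<..<Min R}" if "y \<in> Y" for y
  proof
    assume y: "f y \<in> {Max L<..<Min R}"
    show False
    proof (cases "f y < c")
      case True
      then have "f y \<in> L" using that y bounds by (auto simp: L_def)
      then show False using geL y by fastforce
    next
      case False
      then have "c + a < f y" using that assms(2) by auto
      then have "f y \<in> R" using that y bounds by (auto simp: R_def)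
      then show False using leR y by fastforce
    qed
  qed
  have "a + 1 \<le> Min R - Max L \<or> (\<exists>y1\<in>Y. \<exists>y2\<in>Y. f y1 = Max L \<and> f y2 = Min R)"
    using inL inR bounds by (auto simp: L_def R_def)
  then show ?thesis using that bounds gap by blast
qed

text \<open>Mere emptiness of a box does not survive the limit of a converging sequence of bases, but
  this does: a side can only shrink to exactly \<open>a\<close> (resp. \<open>b\<close>) if a short lattice vector
  has that coordinate.\<close>

definition maximal_empty_box :: "real \<Rightarrow> real \<Rightarrow> pt set \<Rightarrow> pt \<Rightarrow> pt \<Rightarrow> bool" where
  "maximal_empty_box a b L p q \<longleftrightarrow>
     fst p + a < fst q \<and> snd p + b < snd q \<and> L \<inter> box p q = {} \<and>
     (a + 1 \<le> fst q - fst p \<or> (\<exists>w\<in>L. fst w = fst q - fst p \<and> norm w \<le> a + b + 4)) \<and>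
     (b + 1 \<le> snd q - snd p \<or> (\<exists>w\<in>L. snd w = snd q - snd p \<and> norm w \<le> a + b + 4))"

lemma short_lattice_difference:
  assumes "y1 \<in> basis_lattice z \<inter> cbox (c - (1, 1)) (c + (a + 1, b + 1))"
    and "y2 \<in> basis_lattice z \<inter> cbox (c - (1, 1)) (c + (a + 1, b + 1))"
  shows "y2 - y1 \<in> basis_lattice z \<and> norm (y2 - y1) \<le> a + b + 4"
proof -
  have "\<bar>fst (y2 - y1)\<bar> \<le> a + 2" "\<bar>snd (y2 - y1)\<bar> \<le> b + 2"
    using assms by (auto simp: mem_cbox_pt abs_le_iff)
  then show ?thesis
    using basis_lattice_diff[of y2 z y1] assms norm_pt_le[of "y2 - y1"] by auto
qed

lemma exists_maximal_empty_box:
  assumes "basis_det z \<noteq> 0" "0 < a" "0 < b"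
    and empty: "basis_lattice z \<inter> cbox c (c + (a, b)) = {}"
  obtains p q where "p \<in> cbox (c - (1, 1)) (c + (a + 1, b + 1))"
    "q \<in> cbox (c - (1, 1)) (c + (a + 1, b + 1))" "maximal_empty_box a b (basis_lattice z) p q"
proof -
  define Q where "Q = basis_lattice z \<inter> cbox (c - (1, 1)) (c + (a + 1, b + 1))"
  have finQ: "finite Q"
    unfolding Q_def by (intro finite_basis_lattice_inter_bounded assms(1) bounded_cbox)
  have "finite {y \<in> Q. snd c \<le> snd y \<and> snd y \<le> snd c + b}"
    by (rule finite_subset[OF _ finQ]) blast
  moreover have "\<forall>y\<in>{y \<in> Q. snd c \<le> snd y \<and> snd y \<le> snd c + b}. fst y \<notin> {fst c..fst c + a}"
    using empty by (auto simp: Q_def mem_cbox_pt)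
  ultimately obtain l r where lr: "fst c - 1 \<le> l" "l < fst c" "fst c + a < r" "r \<le> fst c + a + 1"
      "\<forall>y\<in>{y \<in> Q. snd c \<le> snd y \<and> snd y \<le> snd c + b}. fst y \<notin> {l<..<r}"
      "a + 1 \<le> r - l \<or> (\<exists>y1\<in>{y \<in> Q. snd c \<le> snd y \<and> snd y \<le> snd c + b}.
         \<exists>y2\<in>{y \<in> Q. snd c \<le> snd y \<and> snd y \<le> snd c + b}. fst y1 = l \<and> fst y2 = r)"
    by (rule exists_maximal_gap)
  have "finite {y \<in> Q. l < fst y \<and> fst y < r}"
    by (rule finite_subset[OF _ finQ]) blast
  moreover have "\<forall>y\<in>{y \<in> Q. l < fst y \<and> fst y < r}. snd y \<notin> {snd c..snd c + b}"
    using lr(5) by auto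
  ultimately obtain dn up where du: "snd c - 1 \<le> dn" "dn < snd c" "snd c + b < up" "up \<le> snd c + b + 1"
      "\<forall>y\<in>{y \<in> Q. l < fst y \<and> fst y < r}. snd y \<notin> {dn<..<up}"
      "b + 1 \<le> up - dn \<or> (\<exists>y1\<in>{y \<in> Q. l < fst y \<and> fst y < r}.
         \<exists>y2\<in>{y \<in> Q. l < fst y \<and> fst y < r}. snd y1 = dn \<and> snd y2 = up)"
    by (rule exists_maximal_gap)
  have "basis_lattice z \<inter> box (l, dn) (r, up) = {}"
  proof (rule equals0I)
    fix y assume "y \<in> basis_lattice z \<inter> box (l, dn) (r, up)"
    then have "y \<in> {y \<in> Q. l < fst y \<and> fst y < r}" "snd y \<in> {dn<..<up}"
      using lr du by (auto simp: Q_def mem_box_pt mem_cbox_pt)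
    then show False using du(5) by blast
  qed
  moreover have "a + 1 \<le> r - l \<or> (\<exists>w\<in>basis_lattice z. fst w = r - l \<and> norm w \<le> a + b + 4)"
    using lr(6) short_lattice_difference[of _ z c a b] unfolding Q_def by force
  moreover have "b + 1 \<le> up - dn \<or> (\<exists>w\<in>basis_lattice z. snd w = up - dn \<and> norm w \<le> a + b + 4)"
    using du(6) short_lattice_difference[of _ z c a b] unfolding Q_def by force
  ultimately have "maximal_empty_box a b (basis_lattice z) (l, dn) (r, up)"
    using lr du by (simp add: maximal_empty_box_def)
  moreover have "(l, dn) \<in> cbox (c - (1, 1)) (c + (a + 1, b + 1))"
    "(r, up) \<in> cbox (c - (1, 1)) (c + (a + 1, b + 1))"
    using lr du assms(2,3) by (auto simp: mem_cbox_pt)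
  ultimately show ?thesis using that by blast
qed

lemma norm_le_if_mem_cbox_around:
  assumes "y \<in> cbox (c - (1, 1)) (c + (a + 1, b + 1))" "0 \<le> a" "0 \<le> b"
  shows "norm y \<le> norm c + a + b + 2"
proof -
  have "\<bar>fst (y - c)\<bar> \<le> a + 1" "\<bar>snd (y - c)\<bar> \<le> b + 1"
    using assms by (auto simp: mem_cbox_pt abs_le_iff)
  then have "norm (y - c) \<le> a + b + 2" using norm_pt_le[of "y - c"] by linarith
  then show ?thesis using norm_triangle_sub[of y c] by linarith
qed

lemma exists_maximal_empty_box_near_origin:
  assumes "basis_det z \<noteq> 0" "0 < a" "0 < b" "\<not> box_piercing a b (basis_lattice z)"
  obtains p q where "norm p \<le> norm (fst z) + norm (snd z) + a + b + 2"
    "norm q \<le> norm (fst z) + norm (snd z) + a + b + 2"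
    "maximal_empty_box a b (basis_lattice z) p q"
proof -
  obtain c where c: "basis_lattice z \<inter> cbox c (c + (a, b)) = {}"
    using assms(4) unfolding box_piercing_def by blast
  obtain p0 where p0: "p0 \<in> basis_lattice z" "norm (c - p0) \<le> norm (fst z) + norm (snd z)"
    using exists_lattice_point_near[OF assms(1)] by blast
  have "basis_lattice z \<inter> cbox (c - p0) (c - p0 + (a, b)) = {}"
  proof (rule equals0I)
    fix y assume "y \<in> basis_lattice z \<inter> cbox (c - p0) (c - p0 + (a, b))"
    then have "y + p0 \<in> basis_lattice z \<inter> cbox c (c + (a, b))"
      using basis_lattice_add p0(1) by (auto simp: mem_cbox_pt)
    then show False using c by blast
  qed
  then obtain p q where "p \<in> cbox (c - p0 - (1, 1)) (c - p0 + (a + 1, b + 1))"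
      "q \<in> cbox (c - p0 - (1, 1)) (c - p0 + (a + 1, b + 1))"
      "maximal_empty_box a b (basis_lattice z) p q"
    by (rule exists_maximal_empty_box[OF assms(1-3)])
  moreover have "norm p \<le> norm (c - p0) + a + b + 2" "norm q \<le> norm (c - p0) + a + b + 2"
    using calculation(1,2) assms(2,3) by (simp_all add: norm_le_if_mem_cbox_around)
  ultimately show ?thesis
    using p0(2) by (intro that[of p q]) simp_all
qed

lemma limit_side_gt:
  fixes pr :: "pt \<Rightarrow> real"
  assumes "finite B"
    and lim_pr: "\<And>n. (\<lambda>m. pr (lattice_point (zs m) n)) \<longlonglongrightarrow> pr (lattice_point z0 n)"
    and lim: "W \<longlonglongrightarrow> W0"
    and gt: "eventually (\<lambda>m. a < W m) sequentially"
    and blocked: "eventually (\<lambda>m. a + 1 \<le> W m \<or> (\<exists>n\<in>B. pr (lattice_point (zs m) n) = W m)) sequentially"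
    and tight: "\<And>m n. pr (lattice_point z0 n) = a \<Longrightarrow> pr (lattice_point (zs m) n) = a"
  shows "a < W0"
proof -
  have "a \<le> W0"
    using gt by (intro tendsto_lowerbound[OF lim]) (auto elim: eventually_mono)
  moreover have "W0 \<noteq> a"
  proof
    assume "W0 = a"
    have "eventually (\<lambda>m. pr (lattice_point (zs m) n) \<noteq> W m) sequentially" for n
    proof (cases "pr (lattice_point z0 n) = a")
      case True
      then show ?thesis using gt tight by (auto elim: eventually_mono)
    next
      case False
      have "(\<lambda>m. pr (lattice_point (zs m) n) - W m) \<longlonglongrightarrow> pr (lattice_point z0 n) - a"
        using lim_pr lim \<open>W0 = a\<close> by (intro tendsto_diff) auto
      then have "eventually (\<lambda>m. pr (lattice_point (zs m) n) - W m \<noteq> 0) sequentially"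
        using False by (intro tendsto_imp_eventually_ne) auto
      then show ?thesis by eventually_elim simp
    qed
    then have "eventually (\<lambda>m. \<forall>n\<in>B. pr (lattice_point (zs m) n) \<noteq> W m) sequentially"
      using assms(1) by (intro eventually_ball_finite) auto
    moreover have "eventually (\<lambda>m. W m < a + 1) sequentially"
      using \<open>W0 = a\<close> by (intro order_tendstoD(2)[OF lim]) simp
    ultimately have "eventually (\<lambda>m. False) sequentially"
      using blocked by eventually_elim auto
    then show False by simp
  qed
  ultimately show ?thesis by simp
qed

lemma lattice_free_box_limit:
  assumes lim: "zs \<longlonglongrightarrow> z0" "ps \<longlonglongrightarrow> p0" "qs \<longlonglongrightarrow> q0"
    and empty: "eventually (\<lambda>m. basis_lattice (zs m) \<inter> box (ps m) (qs m) = {}) sequentially"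
  shows "basis_lattice z0 \<inter> box p0 q0 = {}"
proof (rule equals0I)
  fix y assume "y \<in> basis_lattice z0 \<inter> box p0 q0"
  then have "y \<in> basis_lattice z0" and y: "y \<in> box p0 q0" by auto
  then obtain n where n: "y = lattice_point z0 n" unfolding basis_lattice_iff by blast
  have ly: "(\<lambda>m. lattice_point (zs m) n) \<longlonglongrightarrow> y"
    unfolding n by (rule tendsto_lattice_point[OF lim(1)])
  have "eventually (\<lambda>m. fst (ps m) < fst (lattice_point (zs m) n)) sequentially"
    by (rule eventually_less_of_tendsto[OF tendsto_fst[OF lim(2)] tendsto_fst[OF ly]])
      (use y in \<open>simp add: mem_box_pt\<close>)
  moreover have "eventually (\<lambda>m. fst (lattice_point (zs m) n) < fst (qs m)) sequentially"
    by (rule eventually_less_of_tendsto[OF tendsto_fst[OF ly] tendsto_fst[OF lim(3)]])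
      (use y in \<open>simp add: mem_box_pt\<close>)
  moreover have "eventually (\<lambda>m. snd (ps m) < snd (lattice_point (zs m) n)) sequentially"
    by (rule eventually_less_of_tendsto[OF tendsto_snd[OF lim(2)] tendsto_snd[OF ly]])
      (use y in \<open>simp add: mem_box_pt\<close>)
  moreover have "eventually (\<lambda>m. snd (lattice_point (zs m) n) < snd (qs m)) sequentially"
    by (rule eventually_less_of_tendsto[OF tendsto_snd[OF ly] tendsto_snd[OF lim(3)]])
      (use y in \<open>simp add: mem_box_pt\<close>)
  ultimately have "eventually (\<lambda>m. False) sequentially"
    using empty by eventually_elim (metis IntI emptyE lattice_point_in_basis_lattice mem_box_pt)
  then show False by simp
qed

definition keeps_tight_vectors :: "real \<Rightarrow> real \<Rightarrow> pt \<times> pt \<Rightarrow> pt \<times> pt \<Rightarrow> bool" where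
  "keeps_tight_vectors a b z0 z \<longleftrightarrow>
     (\<forall>n. (fst (lattice_point z0 n) = a \<longrightarrow> fst (lattice_point z n) = a) \<and>
          (snd (lattice_point z0 n) = b \<longrightarrow> snd (lattice_point z n) = b))"

lemma maximal_empty_box_blocked:
  assumes "maximal_empty_box a b (basis_lattice z) p q"
    and short: "\<forall>n. norm (lattice_point z n) \<le> a + b + 4 \<longrightarrow> n \<in> B"
  shows "a + 1 \<le> fst q - fst p \<or> (\<exists>n\<in>B. fst (lattice_point z n) = fst q - fst p)"
    and "b + 1 \<le> snd q - snd p \<or> (\<exists>n\<in>B. snd (lattice_point z n) = snd q - snd p)"
proof -
  have "\<exists>n\<in>B. w = lattice_point z n" if "w \<in> basis_lattice z" "norm w \<le> a + b + 4" for w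
    using that short unfolding basis_lattice_iff by blast
  then show "a + 1 \<le> fst q - fst p \<or> (\<exists>n\<in>B. fst (lattice_point z n) = fst q - fst p)"
    and "b + 1 \<le> snd q - snd p \<or> (\<exists>n\<in>B. snd (lattice_point z n) = snd q - snd p)"
    using assms(1) unfolding maximal_empty_box_def by metis+
qed

lemma limit_of_maximal_empty_boxes:
  assumes "basis_det z0 \<noteq> 0"
    and lim: "zs \<longlonglongrightarrow> z0" "ps \<longlonglongrightarrow> p0" "qs \<longlonglongrightarrow> q0"
    and tight: "\<And>m. keeps_tight_vectors a b z0 (zs m)"
    and boxes: "eventually (\<lambda>m. maximal_empty_box a b (basis_lattice (zs m)) (ps m) (qs m)) sequentially"
  shows "fst p0 + a < fst q0" "snd p0 + b < snd q0" "basis_lattice z0 \<inter> box p0 q0 = {}"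
proof -
  obtain N where "eventually (\<lambda>z. basis_det z \<noteq> 0 \<and>
      (\<forall>n. norm (lattice_point z n) \<le> a + b + 4 \<longrightarrow> n \<in> {-N..N} \<times> {-N..N})) (nhds z0)"
    using eventually_lattice_coeffs_bounded[OF assms(1)] by blast
  from eventually_compose_filterlim[OF this lim(1)] boxes
  have ev: "eventually (\<lambda>m. maximal_empty_box a b (basis_lattice (zs m)) (ps m) (qs m) \<and>
      (\<forall>n. norm (lattice_point (zs m) n) \<le> a + b + 4 \<longrightarrow> n \<in> {-N..N} \<times> {-N..N})) sequentially"
    by eventually_elim blast
  have "a < fst q0 - fst p0"
  proof (rule limit_side_gt[where pr = fst])
    show "(\<lambda>m. fst (qs m) - fst (ps m)) \<longlonglongrightarrow> fst q0 - fst p0"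
      by (intro tendsto_intros lim)
    show "eventually (\<lambda>m. a + 1 \<le> fst (qs m) - fst (ps m) \<or>
        (\<exists>n\<in>{-N..N} \<times> {-N..N}. fst (lattice_point (zs m) n) = fst (qs m) - fst (ps m))) sequentially"
      using ev by eventually_elim (rule maximal_empty_box_blocked(1), auto)
    show "(\<lambda>m. fst (lattice_point (zs m) n)) \<longlonglongrightarrow> fst (lattice_point z0 n)" for n
      by (intro tendsto_fst tendsto_lattice_point lim(1))
    show "fst (lattice_point (zs m) n) = a" if "fst (lattice_point z0 n) = a" for m n
      using tight[of m] that unfolding keeps_tight_vectors_def by blast
  qed (use boxes in \<open>auto simp: maximal_empty_box_def elim: eventually_mono\<close>)
  moreover have "b < snd q0 - snd p0"
  proof (rule limit_side_gt[where pr = snd])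
    show "(\<lambda>m. snd (qs m) - snd (ps m)) \<longlonglongrightarrow> snd q0 - snd p0"
      by (intro tendsto_intros lim)
    show "eventually (\<lambda>m. b + 1 \<le> snd (qs m) - snd (ps m) \<or>
        (\<exists>n\<in>{-N..N} \<times> {-N..N}. snd (lattice_point (zs m) n) = snd (qs m) - snd (ps m))) sequentially"
      using ev by eventually_elim (rule maximal_empty_box_blocked(2), auto)
    show "(\<lambda>m. snd (lattice_point (zs m) n)) \<longlonglongrightarrow> snd (lattice_point z0 n)" for n
      by (intro tendsto_snd tendsto_lattice_point lim(1))
    show "snd (lattice_point (zs m) n) = b" if "snd (lattice_point z0 n) = b" for m n
      using tight[of m] that unfolding keeps_tight_vectors_def by blast
  qed (use boxes in \<open>auto simp: maximal_empty_box_def elim: eventually_mono\<close>)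
  moreover have "basis_lattice z0 \<inter> box p0 q0 = {}"
    using boxes by (intro lattice_free_box_limit[OF lim]) (auto simp: maximal_empty_box_def elim: eventually_mono)
  ultimately show "fst p0 + a < fst q0" "snd p0 + b < snd q0" "basis_lattice z0 \<inter> box p0 q0 = {}"
    by simp_all
qed

lemma exists_bounded_maximal_empty_boxes:
  assumes "0 < a" "0 < b" "basis_det z0 \<noteq> 0"
    and lim: "zs \<longlonglongrightarrow> z0"
    and fails: "\<And>m. \<not> box_piercing a b (basis_lattice (zs m))"
  obtains \<rho> pq where "\<And>m. pq m \<in> cball 0 \<rho> \<times> cball 0 \<rho>"
    "eventually (\<lambda>m. maximal_empty_box a b (basis_lattice (zs m)) (fst (pq m)) (snd (pq m))) sequentially"
proof -
  define C where "C = norm (fst z0) + norm (snd z0) + 1"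
  define \<rho> where "\<rho> = C + a + b + 2"
  define good where "good m \<longleftrightarrow> basis_det (zs m) \<noteq> 0 \<and> norm (fst (zs m)) + norm (snd (zs m)) < C"
    for m
  have "eventually (\<lambda>m. basis_det (zs m) \<noteq> 0) sequentially"
    using assms(3) by (intro tendsto_imp_eventually_ne[OF tendsto_basis_det[OF lim]])
  moreover have "eventually (\<lambda>m. norm (fst (zs m)) + norm (snd (zs m)) < C) sequentially"
    unfolding C_def
    by (intro order_tendstoD(2)[OF tendsto_add[OF tendsto_norm[OF tendsto_fst[OF lim]]
          tendsto_norm[OF tendsto_snd[OF lim]]]]) simp
  ultimately have ev_good: "eventually good sequentially"
    unfolding good_def by eventually_elim simp
  have "\<exists>pq. pq \<in> cball 0 \<rho> \<times> cball 0 \<rho> \<and>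
      (good m \<longrightarrow> maximal_empty_box a b (basis_lattice (zs m)) (fst pq) (snd pq))" for m
  proof (cases "good m")
    case True
    then obtain p q where "norm p \<le> norm (fst (zs m)) + norm (snd (zs m)) + a + b + 2"
        "norm q \<le> norm (fst (zs m)) + norm (snd (zs m)) + a + b + 2"
        "maximal_empty_box a b (basis_lattice (zs m)) p q"
      using exists_maximal_empty_box_near_origin[OF _ assms(1,2) fails] unfolding good_def by blast
    then show ?thesis using True unfolding good_def \<rho>_def by (intro exI[of _ "(p, q)"]) auto
  next
    case False
    then show ?thesis using assms(1,2) by (intro exI[of _ "(0, 0)"]) (auto simp: \<rho>_def C_def)
  qed
  then obtain pq where pq: "\<And>m. pq m \<in> cball 0 \<rho> \<times> cball 0 \<rho>"
      "\<And>m. good m \<Longrightarrow> maximal_empty_box a b (basis_lattice (zs m)) (fst (pq m)) (snd (pq m))"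
    by metis
  have "eventually (\<lambda>m. maximal_empty_box a b (basis_lattice (zs m)) (fst (pq m)) (snd (pq m)))
      sequentially"
    using ev_good by eventually_elim (rule pq(2))
  then show ?thesis using that pq(1) by blast
qed

lemma tight_nonpiercing_sequence_impossible:
  assumes "0 < a" "0 < b" "basis_det z0 \<noteq> 0" "box_piercing a b (basis_lattice z0)"
    and lim: "zs \<longlonglongrightarrow> z0"
    and tight: "\<And>m. keeps_tight_vectors a b z0 (zs m)"
    and fails: "\<And>m. \<not> box_piercing a b (basis_lattice (zs m))"
  shows False
proof -
  obtain \<rho> pq where pq: "\<And>m. pq m \<in> cball 0 \<rho> \<times> cball 0 \<rho>"
      and boxes: "eventually (\<lambda>m. maximal_empty_box a b (basis_lattice (zs m))
        (fst (pq m)) (snd (pq m))) sequentially"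
    using exists_bounded_maximal_empty_boxes[OF assms(1-3) lim fails] by blast
  obtain pq0 \<sigma> where \<sigma>: "strict_mono \<sigma>" "(pq \<circ> \<sigma>) \<longlonglongrightarrow> pq0"
    using seq_compactE[OF compact_imp_seq_compact[OF compact_Times[OF compact_cball compact_cball]]] pq
    by blast
  have "eventually (\<lambda>m. maximal_empty_box a b (basis_lattice (zs (\<sigma> m)))
      (fst (pq (\<sigma> m))) (snd (pq (\<sigma> m)))) sequentially"
    by (rule eventually_compose_filterlim[OF boxes filterlim_subseq[OF \<sigma>(1)]])
  moreover have "(\<lambda>m. zs (\<sigma> m)) \<longlonglongrightarrow> z0"
    using LIMSEQ_subseq_LIMSEQ[OF lim \<sigma>(1)] by (simp add: comp_def)
  moreover have "(\<lambda>m. fst (pq (\<sigma> m))) \<longlonglongrightarrow> fst pq0" "(\<lambda>m. snd (pq (\<sigma> m))) \<longlonglongrightarrow> snd pq0"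
    using tendsto_fst[OF \<sigma>(2)] tendsto_snd[OF \<sigma>(2)] by (simp_all add: comp_def)
  ultimately have "fst (fst pq0) + a < fst (snd pq0)" "snd (fst pq0) + b < snd (snd pq0)"
    "basis_lattice z0 \<inter> box (fst pq0) (snd pq0) = {}"
    using limit_of_maximal_empty_boxes[OF assms(3) _ _ _ tight] by blast+
  then show False using box_piercing_meets_wider_box[OF assms(4)] by blast
qed

lemma eventually_box_piercing_if_keeps_tight:
  assumes "0 < a" "0 < b" "basis_det z0 \<noteq> 0" "box_piercing a b (basis_lattice z0)"
  shows "eventually (\<lambda>z. keeps_tight_vectors a b z0 z \<longrightarrow> box_piercing a b (basis_lattice z)) (nhds z0)"
proof -
  have "eventually (\<lambda>z. False)
      (inf (nhds z0) (principal {z. keeps_tight_vectors a b z0 z \<and> \<not> box_piercing a b (basis_lattice z)}))"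
    by (rule sequentially_imp_eventually_nhds_within)
      (use tight_nonpiercing_sequence_impossible[OF assms] in blast)
  then show ?thesis by (simp add: eventually_inf_principal)
qed

section \<open>Existence of an optimal lattice\<close>

definition piercing_basis :: "(real \<times> real) set \<Rightarrow> pt \<times> pt \<Rightarrow> bool" where
  "piercing_basis S z \<longleftrightarrow> basis_det z \<noteq> 0 \<and> (\<forall>(a, b)\<in>S. box_piercing a b (basis_lattice z))"

definition optimal_basis :: "(real \<times> real) set \<Rightarrow> pt \<times> pt \<Rightarrow> bool" where
  "optimal_basis S z \<longleftrightarrow> piercing_basis S z \<and>
     (\<forall>z'. piercing_basis S z' \<longrightarrow> \<bar>basis_det z'\<bar> \<le> \<bar>basis_det z\<bar>)"

lemma ceiling_multiple_bounds:
  fixes x d :: real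
  assumes "0 < d"
  shows "x \<le> of_int \<lceil>x / d\<rceil> * d" "of_int \<lceil>x / d\<rceil> * d \<le> x + d"
proof -
  have "x / d \<le> of_int \<lceil>x / d\<rceil>" by (rule le_of_int_ceiling)
  then show "x \<le> of_int \<lceil>x / d\<rceil> * d" using pos_divide_le_eq[OF assms] by blast
  have "of_int \<lceil>x / d\<rceil> \<le> x / d + 1" using ceiling_correct[of "x / d"] by linarith
  then have "of_int \<lceil>x / d\<rceil> * d \<le> (x / d + 1) * d" using assms by (intro mult_right_mono) auto
  then show "of_int \<lceil>x / d\<rceil> * d \<le> x + d" using assms by (simp add: distrib_right)
qed

lemma box_piercing_rectangular_lattice:
  assumes "0 < a" "0 < b"
  shows "box_piercing a b (basis_lattice ((a, 0), (0, b)))"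
  unfolding box_piercing_def
proof
  fix c :: pt
  define y where "y = lattice_point ((a, 0), (0, b)) (\<lceil>fst c / a\<rceil>, \<lceil>snd c / b\<rceil>)"
  have "y = (of_int \<lceil>fst c / a\<rceil> * a, of_int \<lceil>snd c / b\<rceil> * b)"
    by (simp add: y_def lattice_point_def)
  then have "y \<in> cbox c (c + (a, b))"
    using ceiling_multiple_bounds[OF assms(1), of "fst c"] ceiling_multiple_bounds[OF assms(2), of "snd c"]
    by (simp add: mem_cbox_pt)
  then show "\<exists>y\<in>basis_lattice ((a, 0), (0, b)). y \<in> cbox c (c + (a, b))"
    using lattice_point_in_basis_lattice y_def by blast
qed

lemma compact_short_piercing_bases:
  assumes "0 < \<delta>"
  shows "compact {z. norm (fst z) \<le> R \<and> norm (snd z) \<le> R \<and> \<delta> \<le> \<bar>basis_det z\<bar> \<and> piercing_basis S z}"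
    (is "compact ?P")
proof (unfold compact_eq_bounded_closed, intro conjI)
  have "?P \<subseteq> cball 0 (2 * R)"
  proof
    fix z assume "z \<in> ?P"
    then have "norm (fst z, snd z) \<le> 2 * R" using norm_Pair_le[of "fst z" "snd z"] by auto
    then show "z \<in> cball 0 (2 * R)" by simp
  qed
  then show "bounded ?P" using bounded_cball bounded_subset by blast
  show "closed ?P"
    unfolding closed_sequential_limits
  proof (intro allI impI, elim conjE)
    fix zs z0 assume zs: "\<forall>m. zs m \<in> ?P" and lim: "zs \<longlonglongrightarrow> z0"
    have "norm (fst z0) \<le> R"
      by (rule tendsto_upperbound[OF tendsto_norm[OF tendsto_fst[OF lim]]]) (use zs in auto)
    moreover have "norm (snd z0) \<le> R"
      by (rule tendsto_upperbound[OF tendsto_norm[OF tendsto_snd[OF lim]]]) (use zs in auto)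
    moreover have "\<delta> \<le> \<bar>basis_det z0\<bar>"
      by (rule tendsto_lowerbound[OF tendsto_rabs[OF tendsto_basis_det[OF lim]]]) (use zs in auto)
    moreover have "box_piercing a b (basis_lattice z0)" if "(a, b) \<in> S" for a b
    proof (rule ccontr)
      assume "\<not> box_piercing a b (basis_lattice z0)"
      then have "eventually (\<lambda>z. \<not> box_piercing a b (basis_lattice z)) (nhds z0)"
        using calculation(3) assms by (intro eventually_not_box_piercing) auto
      from eventually_compose_filterlim[OF this lim]
      obtain m where "\<not> box_piercing a b (basis_lattice (zs m))"
        using eventually_happens'[OF sequentially_bot] by blast
      then show False using zs that by (auto simp: piercing_basis_def)
    qed
    ultimately show "z0 \<in> ?P" using assms by (auto simp: piercing_basis_def)
  qed
qed

lemma exists_short_piercing_basis: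
  assumes "piercing_basis S z" "(a, b) \<in> S" "0 < a + b"
  obtains z' where "piercing_basis S z'" "\<bar>basis_det z'\<bar> = \<bar>basis_det z\<bar>"
    "norm (fst z') \<le> 4 * (a + b)" "norm (snd z') \<le> 4 * (a + b)"
proof -
  have "\<forall>x. \<exists>y\<in>basis_lattice z. norm (y - x) \<le> a + b"
    using assms(1,2) box_piercing_imp_cover by (auto simp: piercing_basis_def)
  then obtain z' where z': "basis_lattice z' = basis_lattice z" "basis_det z' \<noteq> 0"
      "norm (fst z') \<le> 4 * (a + b)" "norm (snd z') \<le> 4 * (a + b)"
    using exists_short_basis assms(1,3) unfolding piercing_basis_def by blast
  have "\<bar>basis_det z'\<bar> = \<bar>basis_det z\<bar>"
    using abs_basis_det_eq_if_same_lattice[OF _ z'(2,1)] assms(1) by (simp add: piercing_basis_def)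
  moreover have "piercing_basis S z'"
    using z'(1,2) assms(1) unfolding piercing_basis_def by simp
  ultimately show ?thesis using that z'(3,4) by blast
qed

lemma exists_piercing_basis:
  assumes "finite S" "\<forall>(a, b)\<in>S. 0 < a \<and> 0 < b"
  obtains z where "piercing_basis S z"
proof -
  define a0 where "a0 = Min (insert 1 (fst ` S))"
  define b0 where "b0 = Min (insert 1 (snd ` S))"
  have "a0 \<in> insert 1 (fst ` S)" unfolding a0_def by (rule Min_in) (use assms(1) in auto)
  moreover have "b0 \<in> insert 1 (snd ` S)" unfolding b0_def by (rule Min_in) (use assms(1) in auto)
  ultimately have pos: "0 < a0" "0 < b0" using assms(2) by auto
  have "box_piercing a b (basis_lattice ((a0, 0), (0, b0)))" if "(a, b) \<in> S" for a b
  proof (rule box_piercing_mono[OF box_piercing_rectangular_lattice[OF pos]])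
    show "a0 \<le> a" unfolding a0_def using assms(1) that by (intro Min_le) force+
    show "b0 \<le> b" unfolding b0_def using assms(1) that by (intro Min_le) force+
  qed
  moreover have "basis_det ((a0, 0), (0, b0)) \<noteq> 0" using pos by (simp add: det2_def)
  ultimately have "piercing_basis S ((a0, 0), (0, b0))" by (auto simp: piercing_basis_def)
  then show ?thesis by (rule that)
qed

lemma exists_optimal_basis:
  assumes "finite S" "(a1, b1) \<in> S" "\<forall>(a, b)\<in>S. 0 < a \<and> 0 < b"
  obtains z where "optimal_basis S z"
proof -
  define s where "s = a1 + b1"
  have "0 < s" using assms(2,3) by (auto simp: s_def)
  obtain z1 where z1: "piercing_basis S z1" using exists_piercing_basis assms(1,3) by blast
  define P where "P = {z. norm (fst z) \<le> 4 * s \<and> norm (snd z) \<le> 4 * s \<and>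
      \<bar>basis_det z1\<bar> \<le> \<bar>basis_det z\<bar> \<and> piercing_basis S z}"
  have reduce: "\<exists>z'\<in>P. \<bar>basis_det z'\<bar> = \<bar>basis_det z\<bar>"
    if pz: "piercing_basis S z" and large: "\<bar>basis_det z1\<bar> \<le> \<bar>basis_det z\<bar>" for z
  proof -
    obtain z' where "piercing_basis S z'" "\<bar>basis_det z'\<bar> = \<bar>basis_det z\<bar>"
        "norm (fst z') \<le> 4 * s" "norm (snd z') \<le> 4 * s"
      by (rule exists_short_piercing_basis[OF pz assms(2)]) (use \<open>0 < s\<close> in \<open>simp_all add: s_def\<close>)
    then show ?thesis using large unfolding P_def by (intro bexI[of _ z']) auto
  qed
  have "compact P"
    unfolding P_def using z1 by (intro compact_short_piercing_bases) (simp add: piercing_basis_def)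
  moreover have "P \<noteq> {}" using reduce[OF z1] by auto
  moreover have "continuous_on P (\<lambda>z. \<bar>basis_det z\<bar>)"
    unfolding det2_def by (intro continuous_intros)
  ultimately obtain zm where zm: "zm \<in> P" "\<forall>z\<in>P. \<bar>basis_det z\<bar> \<le> \<bar>basis_det zm\<bar>"
    using continuous_attains_sup by blast
  have "\<bar>basis_det z\<bar> \<le> \<bar>basis_det zm\<bar>" if "piercing_basis S z" for z
  proof (cases "\<bar>basis_det z1\<bar> \<le> \<bar>basis_det z\<bar>")
    case True
    then show ?thesis using reduce[OF that] zm(2) by force
  next
    case False
    then show ?thesis using zm(1) by (simp add: P_def)
  qed
  then have "optimal_basis S zm" using zm(1) by (simp add: optimal_basis_def P_def)
  then show ?thesis by (rule that)
qed

lemma optimal_basis_swap: "optimal_basis S (snd z, fst z) \<longleftrightarrow> optimal_basis S z"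
proof -
  have "basis_det (snd z, fst z) = - basis_det z" by (simp add: det2_def)
  moreover have "basis_lattice (snd z, fst z) = basis_lattice z" by (simp add: lattice_commute)
  ultimately show ?thesis by (simp add: optimal_basis_def piercing_basis_def)
qed

lemma exists_positive_optimal_basis:
  assumes "finite S" "S \<noteq> {}" "\<forall>(a, b)\<in>S. 0 < a \<and> 0 < b"
  obtains z where "optimal_basis S z" "0 < basis_det z"
proof -
  obtain a1 b1 where "(a1, b1) \<in> S" using assms(2) by auto
  then obtain z where z: "optimal_basis S z" using exists_optimal_basis assms(1,3) by blast
  then have "basis_det z \<noteq> 0" by (simp add: optimal_basis_def piercing_basis_def)
  show ?thesis
  proof (cases "0 < basis_det z")
    case True
    then show ?thesis using that z by blast
  next
    case False
    have "basis_det (snd z, fst z) = - basis_det z" by (simp add: det2_def)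
    then have "0 < basis_det (snd z, fst z)" using False \<open>basis_det z \<noteq> 0\<close> by linarith
    then show ?thesis using that z optimal_basis_swap by blast
  qed
qed

section \<open>Rational solutions of rational linear systems\<close>

definition solves_lin_eq :: "nat \<Rightarrow> (nat \<Rightarrow> real) \<times> real \<Rightarrow> (nat \<Rightarrow> real) \<Rightarrow> bool" where
  "solves_lin_eq k e x \<longleftrightarrow> (\<Sum>i<k. fst e i * x i) = snd e"

definition rational_lin_eq :: "nat \<Rightarrow> (nat \<Rightarrow> real) \<times> real \<Rightarrow> bool" where
  "rational_lin_eq k e \<longleftrightarrow> (\<forall>i<k. fst e i \<in> \<rat>) \<and> snd e \<in> \<rat>"

definition eliminate_last ::
  "nat \<Rightarrow> (nat \<Rightarrow> real) \<times> real \<Rightarrow> (nat \<Rightarrow> real) \<times> real \<Rightarrow> (nat \<Rightarrow> real) \<times> real" where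
  "eliminate_last k e0 e =
     ((\<lambda>i. fst e i - fst e k / fst e0 k * fst e0 i), snd e - fst e k / fst e0 k * snd e0)"

lemma solves_lin_eq_cong:
  "(\<And>i. i < k \<Longrightarrow> x i = y i) \<Longrightarrow> solves_lin_eq k e x \<longleftrightarrow> solves_lin_eq k e y"
  unfolding solves_lin_eq_def by (metis (no_types, lifting) lessThan_iff sum.cong)

lemma rational_lin_eq_eliminate_last:
  assumes "rational_lin_eq (Suc k) e0" "rational_lin_eq (Suc k) e"
  shows "rational_lin_eq k (eliminate_last k e0 e)"
  using assms by (simp add: rational_lin_eq_def eliminate_last_def)

lemma solves_eliminate_last_iff:
  assumes "fst e0 k \<noteq> 0" "solves_lin_eq (Suc k) e0 x"
  shows "solves_lin_eq k (eliminate_last k e0 e) x \<longleftrightarrow> solves_lin_eq (Suc k) e x"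
proof -
  define t where "t = fst e k / fst e0 k"
  have "(\<Sum>i<k. fst (eliminate_last k e0 e) i * x i)
      = (\<Sum>i<k. fst e i * x i) - t * (\<Sum>i<k. fst e0 i * x i)"
    by (simp add: eliminate_last_def t_def sum_subtractf sum_distrib_left algebra_simps)
  also have "\<dots> = (\<Sum>i<k. fst e i * x i) - t * (snd e0 - fst e0 k * x k)"
    using assms(2) by (simp add: solves_lin_eq_def)
  also have "\<dots> = (\<Sum>i<k. fst e i * x i) + (t * fst e0 k) * x k - t * snd e0"
    by (simp add: algebra_simps)
  also have "t * fst e0 k = fst e k" using assms(1) by (simp add: t_def)
  finally have "(\<Sum>i<k. fst (eliminate_last k e0 e) i * x i)
      = (\<Sum>i<Suc k. fst e i * x i) - t * snd e0" by simp
  moreover have "snd (eliminate_last k e0 e) = snd e - t * snd e0"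
    by (simp add: eliminate_last_def t_def)
  ultimately show ?thesis unfolding solves_lin_eq_def by auto
qed

lemma solves_lin_eq_solve_last:
  assumes "fst e0 k \<noteq> 0"
  shows "solves_lin_eq (Suc k) e0 (y(k := (snd e0 - (\<Sum>i<k. fst e0 i * y i)) / fst e0 k))"
proof -
  have "(\<Sum>i<k. fst e0 i * (y(k := v)) i) = (\<Sum>i<k. fst e0 i * y i)" for v
    by (intro sum.cong) auto
  then show ?thesis using assms by (simp add: solves_lin_eq_def)
qed

lemma solves_lin_eq_last_diff:
  assumes "fst e0 k \<noteq> 0" "solves_lin_eq (Suc k) e0 x" "solves_lin_eq (Suc k) e0 y"
  shows "y k - x k = (\<Sum>i<k. fst e0 i / fst e0 k * (x i - y i))"
proof -
  have "fst e0 k * (y k - x k) = (\<Sum>i<k. fst e0 i * (x i - y i))"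
    using assms(2,3) by (simp add: solves_lin_eq_def sum_subtractf algebra_simps)
  then show ?thesis
    using assms(1) by (simp add: sum_divide_distrib[symmetric] field_simps)
qed

lemma solve_last_by_pivot:
  assumes "fst e0 k \<noteq> 0" "rational_lin_eq (Suc k) e0" "solves_lin_eq (Suc k) e0 x"
    and "\<forall>i<k. y' i \<in> \<rat>" "\<forall>i<k. \<bar>y' i - x i\<bar> < \<delta>"
  defines "y \<equiv> y'(k := (snd e0 - (\<Sum>i<k. fst e0 i * y' i)) / fst e0 k)"
  shows "solves_lin_eq (Suc k) e0 y" "\<forall>i<Suc k. y i \<in> \<rat>"
    "\<bar>y k - x k\<bar> \<le> (\<Sum>i<k. \<bar>fst e0 i / fst e0 k\<bar>) * \<delta>"
proof -
  show y0: "solves_lin_eq (Suc k) e0 y"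
    unfolding y_def by (rule solves_lin_eq_solve_last[OF assms(1)])
  have "(\<Sum>i<k. fst e0 i * y' i) \<in> \<rat>"
    using assms(2,4) by (intro Rats_sum) (auto simp: rational_lin_eq_def)
  then have "y k \<in> \<rat>" using assms(2) by (simp add: y_def rational_lin_eq_def)
  then show "\<forall>i<Suc k. y i \<in> \<rat>" using assms(4) by (auto simp: y_def less_Suc_eq)
  have "\<bar>y k - x k\<bar> \<le> (\<Sum>i<k. \<bar>fst e0 i / fst e0 k\<bar> * \<bar>x i - y i\<bar>)"
    unfolding solves_lin_eq_last_diff[OF assms(1,3) y0]
    by (rule order_trans[OF sum_abs]) (simp add: abs_mult)
  also have "\<dots> \<le> (\<Sum>i<k. \<bar>fst e0 i / fst e0 k\<bar>) * \<delta>"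
    unfolding sum_distrib_right using assms(5)
    by (intro sum_mono mult_left_mono) (auto simp: y_def abs_minus_commute less_imp_le)
  finally show "\<bar>y k - x k\<bar> \<le> (\<Sum>i<k. \<bar>fst e0 i / fst e0 k\<bar>) * \<delta>" .
qed

lemma rational_solutions_dense:
  assumes "\<forall>e\<in>E. rational_lin_eq k e" "\<forall>e\<in>E. solves_lin_eq k e x" "0 < \<epsilon>"
  shows "\<exists>y. (\<forall>i<k. y i \<in> \<rat>) \<and> (\<forall>e\<in>E. solves_lin_eq k e y) \<and> (\<forall>i<k. \<bar>y i - x i\<bar> < \<epsilon>)"
  using assms
proof (induction k arbitrary: E \<epsilon>)
  case 0
  then show ?case by (intro exI[of _ x]) (simp add: solves_lin_eq_def)
next
  case (Suc k)
  show ?case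
  proof (cases "\<exists>e0\<in>E. fst e0 k \<noteq> 0")
    case True
    then obtain e0 where e0: "e0 \<in> E" "fst e0 k \<noteq> 0" by blast
    define K where "K = (\<Sum>i<k. \<bar>fst e0 i / fst e0 k\<bar>)"
    define \<delta> where "\<delta> = \<epsilon> / (K + 1)"
    have "0 \<le> K" by (simp add: K_def sum_nonneg)
    then have \<delta>: "0 < \<delta>" "\<delta> \<le> \<epsilon>" "K * \<delta> < \<epsilon>"
      using Suc.prems(3) by (auto simp: \<delta>_def field_simps)
    have "\<forall>e\<in>eliminate_last k e0 ` E. rational_lin_eq k e"
      using Suc.prems(1) e0(1) by (auto intro: rational_lin_eq_eliminate_last)
    moreover have "\<forall>e\<in>eliminate_last k e0 ` E. solves_lin_eq k e x"
      using Suc.prems(2) e0 solves_eliminate_last_iff by blast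
    ultimately obtain y' where y': "\<forall>i<k. y' i \<in> \<rat>"
        "\<forall>e\<in>eliminate_last k e0 ` E. solves_lin_eq k e y'" "\<forall>i<k. \<bar>y' i - x i\<bar> < \<delta>"
      using Suc.IH[of "eliminate_last k e0 ` E" \<delta>] \<delta>(1) by blast
    define y where "y = y'(k := (snd e0 - (\<Sum>i<k. fst e0 i * y' i)) / fst e0 k)"
    have y: "solves_lin_eq (Suc k) e0 y" "\<forall>i<Suc k. y i \<in> \<rat>" "\<bar>y k - x k\<bar> \<le> K * \<delta>"
      using solve_last_by_pivot[OF e0(2) _ _ y'(1,3)] Suc.prems(1,2) e0(1)
      unfolding y_def K_def by blast+
    have "\<forall>e\<in>E. solves_lin_eq (Suc k) e y"
    proof
      fix e assume "e \<in> E"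
      have "solves_lin_eq k (eliminate_last k e0 e) y"
        using y'(2) \<open>e \<in> E\<close> solves_lin_eq_cong[of k y y'] by (simp add: y_def)
      then show "solves_lin_eq (Suc k) e y" using solves_eliminate_last_iff[OF e0(2) y(1)] by blast
    qed
    moreover have "\<forall>i<Suc k. \<bar>y i - x i\<bar> < \<epsilon>"
      using y(3) \<delta>(2,3) y'(3) by (auto simp: y_def less_Suc_eq)
    ultimately show ?thesis using y(2) by blast
  next
    case False
    then have eq: "\<forall>e\<in>E. solves_lin_eq (Suc k) e z \<longleftrightarrow> solves_lin_eq k e z" for z
      by (simp add: solves_lin_eq_def)
    moreover have "\<forall>e\<in>E. rational_lin_eq k e" using Suc.prems(1) by (simp add: rational_lin_eq_def)
    ultimately obtain y' where y': "\<forall>i<k. y' i \<in> \<rat>" "\<forall>e\<in>E. solves_lin_eq k e y'"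
        "\<forall>i<k. \<bar>y' i - x i\<bar> < \<epsilon>"
      using Suc.IH[of E \<epsilon>] Suc.prems(2,3) by blast
    obtain q where q: "q \<in> \<rat>" "x k - \<epsilon> < q" "q < x k + \<epsilon>"
      using Rats_dense_in_real[of "x k - \<epsilon>" "x k + \<epsilon>"] Suc.prems(3) by auto
    define y where "y = y'(k := q)"
    have "solves_lin_eq k e y \<longleftrightarrow> solves_lin_eq k e y'" for e
      by (rule solves_lin_eq_cong) (simp add: y_def)
    then have "\<forall>e\<in>E. solves_lin_eq (Suc k) e y" using eq y'(2) by blast
    moreover have "\<forall>i<Suc k. y i \<in> \<rat>" using y'(1) q(1) by (simp add: y_def less_Suc_eq)
    moreover have "\<forall>i<Suc k. \<bar>y i - x i\<bar> < \<epsilon>"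
      using y'(3) q(2,3) by (auto simp: y_def less_Suc_eq abs_less_iff)
    ultimately show ?thesis by blast
  qed
qed

definition rational_basis :: "pt \<times> pt \<Rightarrow> bool" where
  "rational_basis z \<longleftrightarrow> fst (fst z) \<in> \<rat> \<and> snd (fst z) \<in> \<rat> \<and> fst (snd z) \<in> \<rat> \<and> snd (snd z) \<in> \<rat>"

definition basis_coords :: "pt \<times> pt \<Rightarrow> nat \<Rightarrow> real" where
  "basis_coords z i =
     (if i = 0 then fst (fst z) else if i = 1 then snd (fst z) else if i = 2 then fst (snd z)
      else snd (snd z))"

definition basis_of_coords :: "(nat \<Rightarrow> real) \<Rightarrow> pt \<times> pt" where
  "basis_of_coords x = ((x 0, x 1), (x 2, x 3))"

lemma sum_lessThan_4: "(\<Sum>i<(4::nat). f i) = f 0 + f 1 + f 2 + (f 3 :: real)"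
  by (simp add: eval_nat_numeral)

lemma inner_eq_sum_basis_coords: "inner c z = (\<Sum>i<4. basis_coords c i * basis_coords z i)"
  by (simp add: sum_lessThan_4 basis_coords_def inner_prod_def)

lemma basis_coords_of_coords: "i < 4 \<Longrightarrow> basis_coords (basis_of_coords x) i = x i"
  by (auto simp: basis_coords_def basis_of_coords_def less_Suc_eq numeral_eq_Suc)

lemma rational_basis_iff_coords: "rational_basis z \<longleftrightarrow> (\<forall>i<4. basis_coords z i \<in> \<rat>)"
  by (auto simp: rational_basis_def basis_coords_def less_Suc_eq numeral_eq_Suc)

lemma dist_basis_of_coords_le:
  "dist (basis_of_coords x) z \<le> (\<Sum>i<4. \<bar>x i - basis_coords z i\<bar>)"
proof -
  have "dist (basis_of_coords x) z \<le> norm (fst (basis_of_coords x - z)) + norm (snd (basis_of_coords x - z))"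
    using norm_Pair_le[of "fst (basis_of_coords x - z)" "snd (basis_of_coords x - z)"]
    by (simp only: dist_norm prod.collapse)
  also have "\<dots> \<le> (\<Sum>i<4. \<bar>x i - basis_coords z i\<bar>)"
    using norm_pt_le[of "fst (basis_of_coords x - z)"] norm_pt_le[of "snd (basis_of_coords x - z)"]
    by (simp add: sum_lessThan_4 basis_of_coords_def basis_coords_def)
  finally show ?thesis .
qed

lemma rational_solutions_dense_basis:
  assumes "\<forall>(c, d)\<in>E. rational_basis c \<and> d \<in> \<rat>" "\<forall>(c, d)\<in>E. inner c z = d" "0 < \<epsilon>"
  obtains z' where "rational_basis z'" "\<forall>(c, d)\<in>E. inner c z' = d" "dist z' z < \<epsilon>"
proof -
  define E' where "E' = (\<lambda>(c, d). (basis_coords c, d)) ` E"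
  have "\<forall>e\<in>E'. rational_lin_eq 4 e"
    using assms(1) by (auto simp: E'_def rational_lin_eq_def rational_basis_iff_coords)
  moreover have "\<forall>e\<in>E'. solves_lin_eq 4 e (basis_coords z)"
    using assms(2) by (auto simp: E'_def solves_lin_eq_def inner_eq_sum_basis_coords)
  ultimately obtain y where y: "\<forall>i<4. y i \<in> \<rat>" "\<forall>e\<in>E'. solves_lin_eq 4 e y"
      "\<forall>i<4. \<bar>y i - basis_coords z i\<bar> < \<epsilon> / 4"
    using rational_solutions_dense[of E' 4 "basis_coords z" "\<epsilon> / 4"] assms(3) by auto
  have "inner c (basis_of_coords y) = (\<Sum>i<4. basis_coords c i * y i)" for c
    unfolding inner_eq_sum_basis_coords by (intro sum.cong) (simp_all add: basis_coords_of_coords)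
  then have "\<forall>(c, d)\<in>E. inner c (basis_of_coords y) = d"
    using y(2) by (auto simp: E'_def solves_lin_eq_def)
  moreover have "rational_basis (basis_of_coords y)"
    using y(1) by (simp add: rational_basis_iff_coords basis_coords_of_coords)
  moreover have "dist (basis_of_coords y) z < \<epsilon>"
    using dist_basis_of_coords_le[of y z] y(3)[rule_format, of 0] y(3)[rule_format, of 1]
      y(3)[rule_format, of 2] y(3)[rule_format, of 3]
    unfolding sum_lessThan_4 by simp
  ultimately show ?thesis using that by blast
qed

section \<open>Rationality of an optimal lattice\<close>

definition fst_coeffs :: "int \<times> int \<Rightarrow> pt \<times> pt" where
  "fst_coeffs n = ((of_int (fst n), 0), (of_int (snd n), 0))"

definition snd_coeffs :: "int \<times> int \<Rightarrow> pt \<times> pt" where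
  "snd_coeffs n = ((0, of_int (fst n)), (0, of_int (snd n)))"

lemma lattice_point_eq_inner:
  "fst (lattice_point z n) = inner (fst_coeffs n) z"
  "snd (lattice_point z n) = inner (snd_coeffs n) z"
  by (simp_all add: lattice_point_def fst_coeffs_def snd_coeffs_def inner_prod_def)

definition tight_equations :: "(real \<times> real) set \<Rightarrow> pt \<times> pt \<Rightarrow> ((pt \<times> pt) \<times> real) set" where
  "tight_equations S z0 =
     {(fst_coeffs n, a) | n a b. (a, b) \<in> S \<and> fst (lattice_point z0 n) = a} \<union>
     {(snd_coeffs n, b) | n a b. (a, b) \<in> S \<and> snd (lattice_point z0 n) = b}"

lemma keeps_tight_vectors_iff_tight_equations:
  "(\<forall>(a, b)\<in>S. keeps_tight_vectors a b z0 z) \<longleftrightarrow> (\<forall>(c, d)\<in>tight_equations S z0. inner c z = d)"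
proof
  assume keep: "\<forall>(a, b)\<in>S. keeps_tight_vectors a b z0 z"
  show "\<forall>(c, d)\<in>tight_equations S z0. inner c z = d"
  proof (clarify)
    fix c d assume "(c, d) \<in> tight_equations S z0"
    then consider n a b where "(a, b) \<in> S" "fst (lattice_point z0 n) = a" "c = fst_coeffs n" "d = a"
      | n a b where "(a, b) \<in> S" "snd (lattice_point z0 n) = b" "c = snd_coeffs n" "d = b"
      unfolding tight_equations_def by blast
    then show "inner c z = d"
      by cases (use keep in \<open>fastforce simp: keeps_tight_vectors_def lattice_point_eq_inner\<close>)+
  qed
next
  assume eqs: "\<forall>(c, d)\<in>tight_equations S z0. inner c z = d"
  show "\<forall>(a, b)\<in>S. keeps_tight_vectors a b z0 z"
    unfolding keeps_tight_vectors_def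
  proof (clarify, intro conjI impI)
    fix a b n assume "(a, b) \<in> S" "fst (lattice_point z0 n) = a"
    then have "(fst_coeffs n, a) \<in> tight_equations S z0" unfolding tight_equations_def by blast
    then show "fst (lattice_point z n) = a" using eqs by (auto simp: lattice_point_eq_inner)
  next
    fix a b n assume "(a, b) \<in> S" "snd (lattice_point z0 n) = b"
    then have "(snd_coeffs n, b) \<in> tight_equations S z0" unfolding tight_equations_def by blast
    then show "snd (lattice_point z n) = b" using eqs by (auto simp: lattice_point_eq_inner)
  qed
qed

lemma tight_equations_hold: "\<forall>(c, d)\<in>tight_equations S z0. inner c z0 = d"
  using keeps_tight_vectors_iff_tight_equations[of S z0 z0] by (simp add: keeps_tight_vectors_def)

lemma tight_equations_rational:
  assumes "\<forall>(a, b)\<in>S. a \<in> \<rat> \<and> b \<in> \<rat>"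
  shows "\<forall>(c, d)\<in>tight_equations S z0. rational_basis c \<and> d \<in> \<rat>"
  using assms by (auto simp: tight_equations_def rational_basis_def fst_coeffs_def snd_coeffs_def)

lemma eventually_piercing_basis_if_tight:
  assumes "finite S" "\<forall>(a, b)\<in>S. 0 < a \<and> 0 < b" "piercing_basis S z0"
  shows "eventually (\<lambda>z. (\<forall>(c, d)\<in>tight_equations S z0. inner c z = d) \<longrightarrow> piercing_basis S z)
    (nhds z0)"
proof -
  have "eventually (\<lambda>z. basis_det z \<noteq> 0) (nhds z0)"
    using assms(3) unfolding piercing_basis_def
    by (intro tendsto_imp_eventually_ne[OF tendsto_basis_det[OF filterlim_ident]]) simp
  moreover have "eventually (\<lambda>z. \<forall>(a, b)\<in>S.
      keeps_tight_vectors a b z0 z \<longrightarrow> box_piercing a b (basis_lattice z)) (nhds z0)"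
    using assms by (intro eventually_ball_finite)
      (auto simp: piercing_basis_def intro: eventually_box_piercing_if_keeps_tight)
  ultimately show ?thesis
    unfolding keeps_tight_vectors_iff_tight_equations[symmetric]
    by eventually_elim (auto simp: piercing_basis_def)
qed

definition det_polar :: "pt \<times> pt \<Rightarrow> pt \<times> pt \<Rightarrow> real" where
  "det_polar z w = det2 (fst z) (snd w) + det2 (fst w) (snd z)"

definition polar_coeffs :: "pt \<times> pt \<Rightarrow> pt \<times> pt" where
  "polar_coeffs w = ((snd (snd w), - fst (snd w)), (- snd (fst w), fst (fst w)))"

lemma basis_det_add_scaleR:
  "basis_det (z + s *\<^sub>R w) = basis_det z + s * det_polar z w + s\<^sup>2 * basis_det w"
  by (simp add: det_polar_def det2_def algebra_simps power2_eq_square)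

lemma det_polar_self: "det_polar w w = 2 * basis_det w"
  by (simp add: det_polar_def det2_def)

lemma det_polar_diff_left: "det_polar (z - z') w = det_polar z w - det_polar z' w"
  by (simp add: det_polar_def det2_def algebra_simps)

lemma det_polar_eq_inner: "det_polar z w = inner (polar_coeffs w) z"
  by (simp add: det_polar_def polar_coeffs_def det2_def inner_prod_def algebra_simps)

lemma rational_basis_polar_coeffs: "rational_basis w \<Longrightarrow> rational_basis (polar_coeffs w)"
  by (simp add: rational_basis_def polar_coeffs_def)

text \<open>Substitute \<open>s = t \<beta>\<close> with \<open>t \<rightarrow> 0+\<close>: then \<open>s \<beta> + s\<^sup>2 q = t \<beta>\<^sup>2 (1 + t q)\<close>.\<close>

lemma linear_coeff_zero_if_nonpos_near_zero:
  fixes \<beta> q :: real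
  assumes "eventually (\<lambda>s. s * \<beta> + s\<^sup>2 * q \<le> 0) (nhds 0)"
  shows "\<beta> = 0"
proof (rule ccontr)
  assume "\<beta> \<noteq> 0"
  have t: "((\<lambda>t. t) \<longlongrightarrow> 0) (at_right (0 :: real))" by (rule tendsto_ident_at)
  have "((\<lambda>t. t * \<beta>) \<longlongrightarrow> 0) (at_right 0)" using tendsto_mult[OF t tendsto_const, of \<beta>] by simp
  from eventually_compose_filterlim[OF assms this]
  have "eventually (\<lambda>t. t * \<beta>\<^sup>2 * (1 + t * q) \<le> 0) (at_right 0)"
    by eventually_elim (simp add: power2_eq_square algebra_simps)
  moreover have "((\<lambda>t. 1 + t * q) \<longlongrightarrow> 1) (at_right (0 :: real))"
    using tendsto_add[OF tendsto_const[of "1 :: real"] tendsto_mult[OF t tendsto_const[of q]]] by simp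
  then have "eventually (\<lambda>t. 0 < 1 + t * q) (at_right 0)"
    by (rule order_tendstoD(1)) simp
  moreover have "eventually (\<lambda>t. 0 < t) (at_right (0 :: real))" by (rule eventually_at_right_less)
  ultimately have "eventually (\<lambda>t. False) (at_right (0 :: real))"
    by eventually_elim (use \<open>\<beta> \<noteq> 0\<close> in \<open>metis mult_pos_pos not_le zero_less_power2\<close>)
  then show False by simp
qed

lemma optimal_basis_critical:
  assumes opt: "optimal_basis S z0" "0 < basis_det z0"
    and stable: "eventually (\<lambda>z. (\<forall>(c, d)\<in>T. inner c z = d) \<longrightarrow> piercing_basis S z) (nhds z0)"
    and hold: "\<forall>(c, d)\<in>T. inner c z0 = d" and dir: "\<forall>(c, d)\<in>T. inner c w = 0"
  shows "det_polar z0 w = 0"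
proof (rule linear_coeff_zero_if_nonpos_near_zero)
  have "((\<lambda>s. z0 + s *\<^sub>R w) \<longlongrightarrow> z0 + 0 *\<^sub>R w) (nhds 0)"
    by (intro tendsto_intros filterlim_ident)
  then have "((\<lambda>s. z0 + s *\<^sub>R w) \<longlongrightarrow> z0) (nhds 0)" by simp
  from eventually_compose_filterlim[OF stable this]
  show "eventually (\<lambda>s. s * det_polar z0 w + s\<^sup>2 * basis_det w \<le> 0) (nhds 0)"
  proof eventually_elim
    case (elim s)
    have "\<forall>(c, d)\<in>T. inner c (z0 + s *\<^sub>R w) = d"
      using hold dir by (auto simp: case_prod_beta inner_add_right)
    then have "piercing_basis S (z0 + s *\<^sub>R w)" using elim by blast
    then have "\<bar>basis_det (z0 + s *\<^sub>R w)\<bar> \<le> \<bar>basis_det z0\<bar>"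
      using opt(1) unfolding optimal_basis_def by blast
    then have "basis_det (z0 + s *\<^sub>R w) \<le> basis_det z0"
      using abs_le_D1 abs_of_pos[OF opt(2)] by fastforce
    then show ?case unfolding basis_det_add_scaleR by linarith
  qed
qed

lemma tight_direction_in_closure:
  assumes "\<forall>(c, d)\<in>T. rational_basis c" "\<forall>(c, d)\<in>T. inner c w = 0"
  shows "w \<in> closure {w'. rational_basis w' \<and> (\<forall>(c, d)\<in>T. inner c w' = 0)}"
  unfolding closure_approachable
proof (intro allI impI)
  fix e :: real assume "0 < e"
  obtain w' where "rational_basis w'" "\<forall>(c, d)\<in>(\<lambda>e. (fst e, 0 :: real)) ` T. inner c w' = d"
      "dist w' w < e"
    by (rule rational_solutions_dense_basis[of "(\<lambda>e. (fst e, 0)) ` T" w e])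
      (use assms \<open>0 < e\<close> in \<open>auto simp: case_prod_beta\<close>)
  then show "\<exists>w'\<in>{w'. rational_basis w' \<and> (\<forall>(c, d)\<in>T. inner c w' = 0)}. dist w' w < e"
    by (intro bexI[of _ w']) (auto simp: case_prod_beta)
qed

lemma basis_det_add_eq_if_polar_vanishes:
  assumes "det_polar z d = 0" "d \<in> closure W" "\<forall>w\<in>W. det_polar d w = 0"
  shows "basis_det (z + d) = basis_det z"
proof -
  have "closed {w. det_polar d w = 0}"
    unfolding det_polar_def det2_def by (intro closed_Collect_eq continuous_intros)
  then have "closure W \<subseteq> {w. det_polar d w = 0}"
    using assms(3) by (intro closure_minimal) auto
  then have "basis_det d = 0" using assms(2) det_polar_self[of d] by auto
  then show ?thesis using basis_det_add_scaleR[of z 1 d] assms(1) by simp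
qed

text \<open>With \<open>d = z - z0\<close> a tight direction,
  \<open>basis_det (z0 + d) = basis_det z0 + det_polar z0 d + basis_det d\<close>.  The middle term
  vanishes by criticality, and \<open>basis_det d = det_polar d d / 2\<close> vanishes because
  \<open>det_polar d\<close> is continuous and vanishes on the rational tight directions, which are dense.\<close>

lemma basis_det_eq_if_critical:
  assumes Trat: "\<forall>(c, d)\<in>T. rational_basis c"
    and hold: "\<forall>(c, d)\<in>T. inner c z0 = d"
    and crit: "\<And>w. \<forall>(c, d)\<in>T. inner c w = 0 \<Longrightarrow> det_polar z0 w = 0"
    and sol: "\<forall>(c, d)\<in>T. inner c z = d"
    and polar: "\<And>w. rational_basis w \<Longrightarrow> \<forall>(c, d)\<in>T. inner c w = 0 \<Longrightarrow> det_polar z w = 0"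
  shows "basis_det z = basis_det z0"
proof -
  define W where "W = {w. rational_basis w \<and> (\<forall>(c, d)\<in>T. inner c w = 0)}"
  have dir: "\<forall>(c, d)\<in>T. inner c (z - z0) = 0"
    using sol hold by (auto simp: case_prod_beta inner_diff_right)
  have "det_polar (z - z0) w = 0" if "w \<in> W" for w
    using polar crit that by (simp add: W_def det_polar_diff_left)
  moreover have "z - z0 \<in> closure W"
    unfolding W_def using Trat dir by (rule tight_direction_in_closure)
  ultimately have "basis_det (z0 + (z - z0)) = basis_det z0"
    using crit[OF dir] by (intro basis_det_add_eq_if_polar_vanishes) auto
  then show ?thesis by simp
qed

lemma exists_rational_optimal_basis:
  assumes "finite S" "\<forall>(a, b)\<in>S. 0 < a \<and> 0 < b \<and> a \<in> \<rat> \<and> b \<in> \<rat>"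
    and opt: "optimal_basis S z0" "0 < basis_det z0"
  obtains z where "optimal_basis S z" "rational_basis z"
proof -
  define T where "T = tight_equations S z0"
  define W where "W = {w. rational_basis w \<and> (\<forall>(c, d)\<in>T. inner c w = 0)}"
  have Trat: "\<forall>(c, d)\<in>T. rational_basis c \<and> d \<in> \<rat>"
    unfolding T_def using assms(2) by (intro tight_equations_rational) auto
  have hold: "\<forall>(c, d)\<in>T. inner c z0 = d"
    unfolding T_def by (rule tight_equations_hold)
  have stable: "eventually (\<lambda>z. (\<forall>(c, d)\<in>T. inner c z = d) \<longrightarrow> piercing_basis S z) (nhds z0)"
    unfolding T_def using assms(1,2) opt(1)
    by (intro eventually_piercing_basis_if_tight) (auto simp: optimal_basis_def)
  then obtain \<epsilon> where "0 < \<epsilon>"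
    and \<epsilon>: "\<And>z. dist z z0 < \<epsilon> \<Longrightarrow> (\<forall>(c, d)\<in>T. inner c z = d) \<Longrightarrow> piercing_basis S z"
    unfolding eventually_nhds_metric by blast
  have crit: "det_polar z0 w = 0" if "\<forall>(c, d)\<in>T. inner c w = 0" for w
    by (rule optimal_basis_critical[OF opt stable hold that])
  define E where "E = T \<union> (\<lambda>w. (polar_coeffs w, 0)) ` W"
  have "\<forall>(c, d)\<in>E. rational_basis c \<and> d \<in> \<rat>"
    using Trat by (auto simp: E_def W_def rational_basis_polar_coeffs)
  moreover have "\<forall>(c, d)\<in>E. inner c z0 = d"
    using hold crit by (auto simp: E_def W_def det_polar_eq_inner[symmetric])
  ultimately obtain z where z: "rational_basis z" "\<forall>(c, d)\<in>E. inner c z = d" "dist z z0 < \<epsilon>"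
    using rational_solutions_dense_basis \<open>0 < \<epsilon>\<close> by blast
  have "piercing_basis S z" using \<epsilon> z(2,3) by (simp add: E_def)
  have "basis_det z = basis_det z0"
  proof (rule basis_det_eq_if_critical[OF _ hold crit])
    show "\<forall>(c, d)\<in>T. rational_basis c" using Trat by auto
    show "\<forall>(c, d)\<in>T. inner c z = d" using z(2) by (simp add: E_def)
    show "det_polar z w = 0" if "rational_basis w" "\<forall>(c, d)\<in>T. inner c w = 0" for w
    proof -
      have "(polar_coeffs w, 0) \<in> E" using that by (simp add: E_def W_def)
      then show ?thesis using z(2) by (auto simp: det_polar_eq_inner)
    qed
  qed
  then have "\<bar>basis_det z\<bar> = \<bar>basis_det z0\<bar>" by simp
  then have "optimal_basis S z"
    using \<open>piercing_basis S z\<close> opt(1) unfolding optimal_basis_def by simp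
  then show ?thesis using that z(1) by blast
qed

lemma rational_rectangles_sides:
  assumes "finite F" "F \<noteq> {}" "\<forall>R\<in>F. rational_rectangle R"
  obtains S where "finite S" "S \<noteq> {}" "\<forall>(a, b)\<in>S. 0 < a \<and> 0 < b \<and> a \<in> \<rat> \<and> b \<in> \<rat>"
    "\<forall>P. piercing F P \<longleftrightarrow> (\<forall>(a, b)\<in>S. box_piercing a b P)"
proof -
  have "\<forall>R\<in>F. \<exists>pq. R = cbox (fst pq) (snd pq) \<and> fst (fst pq) < fst (snd pq) \<and>
      snd (fst pq) < snd (snd pq) \<and> fst (snd pq) - fst (fst pq) \<in> \<rat> \<and> snd (snd pq) - snd (fst pq) \<in> \<rat>"
    using assms(3) unfolding rational_rectangle_def by fastforce
  then obtain pq where pq: "\<forall>R\<in>F. R = cbox (fst (pq R)) (snd (pq R)) \<and>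
      fst (fst (pq R)) < fst (snd (pq R)) \<and> snd (fst (pq R)) < snd (snd (pq R)) \<and>
      fst (snd (pq R)) - fst (fst (pq R)) \<in> \<rat> \<and> snd (snd (pq R)) - snd (fst (pq R)) \<in> \<rat>"
    by metis
  define side where
    "side R = (fst (snd (pq R)) - fst (fst (pq R)), snd (snd (pq R)) - snd (fst (pq R)))" for R
  have "(\<forall>t. \<exists>y\<in>P. y \<in> (\<lambda>x. t + x) ` R) \<longleftrightarrow> box_piercing (fst (side R)) (snd (side R)) P"
    if "R \<in> F" for R P
    using piercing_translates_cbox_iff[of P "fst (pq R)" "snd (pq R)"] pq that by (simp add: side_def)
  then have "piercing F P \<longleftrightarrow> (\<forall>(a, b)\<in>side ` F. box_piercing a b P)" for P
    unfolding piercing_def by (auto simp: case_prod_beta)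
  moreover have "\<forall>(a, b)\<in>side ` F. 0 < a \<and> 0 < b \<and> a \<in> \<rat> \<and> b \<in> \<rat>"
    using pq by (auto simp: side_def)
  ultimately show ?thesis using that[of "side ` F"] assms(1,2) by blast
qed

theorem corollary1:
  fixes F :: "(real \<times> real) set set"
  assumes "finite F" and "F \<noteq> {}"
    and "\<forall>R\<in>F. rational_rectangle R"
  shows "\<exists>u v. lin_indep2 u v \<and> piercing F (lattice u v)
           \<and> (\<forall>u' v'. lin_indep2 u' v' \<and> piercing F (lattice u' v')
                  \<longrightarrow> lattice_density u v \<le> lattice_density u' v')
           \<and> (\<exists>b1 b2. lin_indep2 b1 b2 \<and> lattice b1 b2 = lattice u v
                  \<and> fst b1 \<in> \<rat> \<and> snd b1 \<in> \<rat> \<and> fst b2 \<in> \<rat> \<and> snd b2 \<in> \<rat>)"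
proof -
  obtain S where S: "finite S" "S \<noteq> {}" "\<forall>(a, b)\<in>S. 0 < a \<and> 0 < b \<and> a \<in> \<rat> \<and> b \<in> \<rat>"
      and pier_S: "\<forall>P. piercing F P \<longleftrightarrow> (\<forall>(a, b)\<in>S. box_piercing a b P)"
    by (rule rational_rectangles_sides[OF assms]) blast
  have pier: "lin_indep2 u v \<and> piercing F (lattice u v) \<longleftrightarrow> piercing_basis S (u, v)" for u v
    by (simp add: pier_S piercing_basis_def lin_indep2_def)
  obtain z0 where "optimal_basis S z0" "0 < basis_det z0"
    by (rule exists_positive_optimal_basis[OF S(1,2)]) (use S(3) in auto)
  then obtain z where z: "optimal_basis S z" "rational_basis z"
    using exists_rational_optimal_basis[OF S(1,3)] by blast
  have "lattice_density (fst z) (snd z) \<le> lattice_density u' v'"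
    if "lin_indep2 u' v' \<and> piercing F (lattice u' v')" for u' v'
  proof -
    have "\<bar>det2 u' v'\<bar> \<le> \<bar>basis_det z\<bar>" "det2 u' v' \<noteq> 0"
      using that pier[of u' v'] z(1) unfolding optimal_basis_def lin_indep2_def by fastforce+
    then show ?thesis by (simp add: lattice_density_def frac_le)
  qed
  moreover have "lin_indep2 (fst z) (snd z) \<and> piercing F (lattice (fst z) (snd z))"
    using pier[of "fst z" "snd z"] z(1) by (simp add: optimal_basis_def)
  ultimately show ?thesis using z(2) unfolding rational_basis_def by blast
qed

end
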